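(* Let $1\le p<\infty$ and let $v=(v_n)_{n\in\mathbb{N}}$ be a sequence of positive numbers with $\sup_{n\in\mathbb{N}}v_n/v_{n+1}<\infty$, so that the backward shift $B(x_n)_{n\in\mathbb{N}}=(x_{n+1})_{n\in\mathbb{N}}$ is a bounded operator on $\ell^p(\mathbb{N},v)$. Then the following are equivalent: (a) $B$ is distributionally chaotic; (b) $B$ is densely distributionally chaotic; (c) there exist $\varepsilon>0$, an increasing sequence $(N_k)$ in $\mathbb{N}$, finite nonempty subsets $S_k\subset\mathbb{N}$ ($k\in\mathbb{N}$) and nonzero complex numbers $(C_{k,j})_{k\in\mathbb{N},j\in S_k}$ such that for every $k\in\mathbb{N}$ \[\operatorname{card}\Big\{1\le n\le N_k:\ \frac{\sum_{j\in S_k}|C_{k,j}|\,v_{j-n}}{\sum_{j\in S_k}|C_{k,j}|\,v_j}\ge k\Big\}\ge N_k\varepsilon,\] where $v_m:=0$ for $m\le0$.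
   Context: $\ell^p(\mathbb{N},v)=\{(x_n)_{n\in\mathbb{N}}:\sum_{n\ge1}|x_n|^pv_n<\infty\}$ with norm $\|x\|=(\sum_{n\ge1}|x_n|^pv_n)^{1/p}$. For $A\subseteq\mathbb{N}$, $\overline{\mathrm{dens}}(A)=\limsup_{N}\frac{\operatorname{card}(A\cap[1,N])}{N}$, $\underline{\mathrm{dens}}(A)=\liminf_{N}\frac{\operatorname{card}(A\cap[1,N])}{N}$. An operator $T$ on a Banach space $Y$ is distributionally chaotic if there exist an uncountable $\Gamma\subset Y$ and $\varepsilon>0$ such that for every $\delta>0$ and distinct $x,y\in\Gamma$: $\underline{\mathrm{dens}}\{j:\|T^jx-T^jy\|<\varepsilon\}=0$ and $\overline{\mathrm{dens}}\{j:\|T^jx-T^jy\|<\delta\}=1$; densely distributionally chaotic if $\Gamma$ can be chosen dense. *)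

theory Defs
  imports "HOL-Analysis.Analysis"
begin

text \<open>Sequences indexed by \<open>\<nat> = {1,2,...}\<close> are represented as functions
  \<open>nat \<Rightarrow> complex\<close> whose value at index 0 is 0 (canonical representative).\<close>

definition lpv_space :: "real \<Rightarrow> (nat \<Rightarrow> real) \<Rightarrow> (nat \<Rightarrow> complex) set" where
  "lpv_space p v = {x. x 0 = 0 \<and> summable (\<lambda>n. norm (x n) powr p * v n)}"

definition lpv_norm :: "real \<Rightarrow> (nat \<Rightarrow> real) \<Rightarrow> (nat \<Rightarrow> complex) \<Rightarrow> real" where
  "lpv_norm p v x = (\<Sum>n. norm (x n) powr p * v n) powr (1 / p)"

definition bshift :: "(nat \<Rightarrow> complex) \<Rightarrow> (nat \<Rightarrow> complex)" where
  "bshift x = (\<lambda>n. if n = 0 then 0 else x (Suc n))"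

definition upper_dens :: "nat set \<Rightarrow> ereal" where
  "upper_dens A = limsup (\<lambda>N. ereal (real (card (A \<inter> {1..N})) / real N))"

definition lower_dens :: "nat set \<Rightarrow> ereal" where
  "lower_dens A = liminf (\<lambda>N. ereal (real (card (A \<inter> {1..N})) / real N))"

definition dc_set ::
  "('a \<Rightarrow> 'a) \<Rightarrow> 'a set \<Rightarrow> ('a \<Rightarrow> 'a \<Rightarrow> real) \<Rightarrow> 'a set \<Rightarrow> bool" where
  "dc_set T X d \<Gamma> \<longleftrightarrow> \<Gamma> \<subseteq> X \<and> uncountable \<Gamma> \<and>
     (\<exists>\<epsilon>>0. \<forall>\<delta>>0. \<forall>x\<in>\<Gamma>. \<forall>y\<in>\<Gamma>. x \<noteq> y \<longrightarrow>
        lower_dens {j. d ((T ^^ j) x) ((T ^^ j) y) < \<epsilon>} = 0 \<and>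
        upper_dens {j. d ((T ^^ j) x) ((T ^^ j) y) < \<delta>} = 1)"

definition lpv_dist :: "real \<Rightarrow> (nat \<Rightarrow> real) \<Rightarrow> (nat \<Rightarrow> complex) \<Rightarrow> (nat \<Rightarrow> complex) \<Rightarrow> real" where
  "lpv_dist p v x y = lpv_norm p v (x - y)"

definition distr_chaotic_B :: "real \<Rightarrow> (nat \<Rightarrow> real) \<Rightarrow> bool" where
  "distr_chaotic_B p v \<longleftrightarrow> (\<exists>\<Gamma>. dc_set bshift (lpv_space p v) (lpv_dist p v) \<Gamma>)"

definition dense_distr_chaotic_B :: "real \<Rightarrow> (nat \<Rightarrow> real) \<Rightarrow> bool" where
  "dense_distr_chaotic_B p v \<longleftrightarrow> (\<exists>\<Gamma>. dc_set bshift (lpv_space p v) (lpv_dist p v) \<Gamma> \<and>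
      (\<forall>x\<in>lpv_space p v. \<forall>e>0. \<exists>y\<in>\<Gamma>. lpv_dist p v x y < e))"

definition vext :: "(nat \<Rightarrow> real) \<Rightarrow> int \<Rightarrow> real" where
  "vext v m = (if m \<le> 0 then 0 else v (nat m))"

end

theory Submission
  imports Defs
begin

text \<open>
  If the entries of \<open>x\<close> have \<open>p\<close>-th powers \<open>a\<^sub>m\<close>, then
  \<open>R n = \<parallel>B\<^sup>n x\<parallel>\<^sup>p = \<Sum>\<^sub>m a\<^sub>m\<^sub>+\<^sub>n v\<^sub>m\<close> is linear in \<open>a\<close> and satisfies
  \<open>R (n + 1) \<le> M R n\<close>. Condition (c) says that such sequences \<open>R\<close> can grow by any factor \<open>k\<close>
  on a fixed proportion \<open>\<epsilon>\<close> of the times up to \<open>N\<^sub>k\<close>; iterating a last-exit decomposition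
  upgrades this to growth by any factor \<open>K\<close> on a proportion \<open>1 - \<eta>\<close> of a long window.
  Superposing such profiles with rapidly decreasing weights and rapidly increasing time scales
  gives a vector \<open>y\<close> whose orbit is huge on a set of upper density one and tiny on another
  such set. Then the vectors \<open>d + \<lambda> y\<close>, where \<open>d\<close> runs through the finitely supported
  sequences with Gaussian rational entries and \<open>\<lambda>\<close> through dyadic intervals coding \<open>d\<close>,
  form a dense uncountable distributionally scrambled set, since the orbit of \<open>d\<close> vanishes
  eventually. Conversely, if \<open>x \<noteq> y\<close> are distributionally scrambled, truncations of
  \<open>B\<^sup>m (x - y)\<close> at times \<open>m\<close> where the orbit is tiny witness condition (c).
\<close>

lemma norm_diff_powr_le:
  fixes a b :: "'a::real_normed_vector" and p :: real
  assumes "0 \<le> p"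
  shows "norm (a - b) powr p \<le> 2 powr p * (norm a powr p + norm b powr p)"
proof -
  have "norm (a - b) powr p \<le> (2 * max (norm a) (norm b)) powr p"
    using assms norm_triangle_ineq4[of a b] by (intro powr_mono2) auto
  also have "\<dots> = 2 powr p * max (norm a) (norm b) powr p"
    by (simp add: powr_mult)
  also have "max (norm a) (norm b) powr p \<le> norm a powr p + norm b powr p"
    by (simp add: max_def)
  finally show ?thesis
    by simp
qed

lemma powr_inverse_less_iff:
  fixes q e p :: real
  assumes "0 < p" "0 \<le> q" "0 < e"
  shows "q powr (1 / p) < e \<longleftrightarrow> q < e powr p"
proof
  assume "q powr (1 / p) < e"
  then have "(q powr (1 / p)) powr p < e powr p"
    using assms by (intro powr_less_mono2) auto
  then show "q < e powr p"
    using assms by (simp add: powr_powr)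
next
  assume "q < e powr p"
  then have "q powr (1 / p) < (e powr p) powr (1 / p)"
    using assms by (intro powr_less_mono2) auto
  then show "q powr (1 / p) < e"
    using assms by (simp add: powr_powr)
qed

lemma suminf_swap_le:
  fixes g :: "nat \<Rightarrow> nat \<Rightarrow> real"
  assumes nonneg: "\<And>i m. 0 \<le> g i m" and rows: "\<And>m. summable (\<lambda>i. g i m)"
    and cols: "\<And>i. summable (g i)" and total: "summable (\<lambda>i. \<Sum>m. g i m)"
  shows "summable (\<lambda>m. \<Sum>i. g i m)" and "(\<Sum>m. \<Sum>i. g i m) \<le> (\<Sum>i. \<Sum>m. g i m)"
proof -
  have partial: "(\<Sum>m<T. \<Sum>i. g i m) \<le> (\<Sum>i. \<Sum>m. g i m)" for T
  proof -
    have "(\<Sum>m<T. \<Sum>i. g i m) = (\<Sum>i. \<Sum>m<T. g i m)"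
      using suminf_sum[of "{..<T}" "\<lambda>m i. g i m"] rows by simp
    also have "\<dots> \<le> (\<Sum>i. \<Sum>m. g i m)"
      using rows cols nonneg total by (intro suminf_le sum_le_suminf summable_sum) auto
    finally show ?thesis .
  qed
  show summable: "summable (\<lambda>m. \<Sum>i. g i m)"
  proof (rule bounded_imp_summable)
    show "0 \<le> (\<Sum>i. g i m)" for m
      using rows nonneg by (intro suminf_nonneg)
    show "(\<Sum>m\<le>n. \<Sum>i. g i m) \<le> (\<Sum>i. \<Sum>m. g i m)" for n
      using partial[of "Suc n"] by (simp add: lessThan_Suc_atMost)
  qed
  show "(\<Sum>m. \<Sum>i. g i m) \<le> (\<Sum>i. \<Sum>m. g i m)"
    by (rule suminf_le_const[OF summable partial])
qed

lemma eventually_inverse_add_2_less: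
  fixes e :: real
  assumes "0 < e"
  shows "\<forall>\<^sub>F i in sequentially. 1 / real (i + 2) < e"
proof -
  obtain n :: nat where "1 / e < n"
    using reals_Archimedean2 by blast
  show ?thesis
    using eventually_ge_at_top[of n]
  proof eventually_elim
    case (elim i)
    with \<open>1 / e < n\<close> have "1 / e < real (i + 2)"
      by linarith
    with assms show ?case
      by (simp add: field_simps)
  qed
qed

lemma eventually_half_power_less:
  fixes \<delta> :: real
  assumes "0 < \<delta>"
  shows "\<forall>\<^sub>F i in sequentially. (1 / 2) ^ Suc i < \<delta>"
proof -
  have "\<forall>\<^sub>F i in sequentially. (1 / 2 :: real) ^ i < \<delta>"
    using order_tendstoD(2)[OF LIMSEQ_power_zero[of "1 / 2 :: real"] assms] by simp
  then show ?thesis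
    by (rule eventually_mono) (use assms in simp)
qed

lemma dyadic_index_unique:
  fixes l :: real
  assumes "(1 / 2) ^ Suc q < l" "l < (1 / 2) ^ q" "(1 / 2) ^ Suc q' < l" "l < (1 / 2) ^ q'"
  shows "q = q'"
proof (rule ccontr)
  assume "q \<noteq> q'"
  then consider "Suc q \<le> q'" | "Suc q' \<le> q"
    by linarith
  then show False
  proof cases
    case 1
    then have "(1 / 2 :: real) ^ q' \<le> (1 / 2) ^ Suc q"
      by (intro power_decreasing) auto
    with assms show False
      by simp
  next
    case 2
    then have "(1 / 2 :: real) ^ q \<le> (1 / 2) ^ Suc q'"
      by (intro power_decreasing) auto
    with assms show False
      by simp
  qed
qed

section \<open>Upper and lower densities\<close>

lemma card_Int_atLeastAtMost_le: "card (A \<inter> {1..N}) \<le> N"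
  using card_mono[of "{1..N}" "A \<inter> {1..N}"] by auto

lemma upper_dens_eq_1_iff:
  "upper_dens A = 1 \<longleftrightarrow> (\<forall>r<1. \<exists>\<^sub>F N in sequentially. r * real N < real (card (A \<inter> {1..N})))"
proof -
  define f where "f N = ereal (card (A \<inter> {1..N}) / N)" for N
  have "f N \<le> 1" for N
    using card_Int_atLeastAtMost_le[of A N] by (cases "N = 0") (auto simp: f_def)
  then have le_1: "limsup f \<le> 1"
    by (intro Limsup_bounded) auto
  have ratio: "f N < ereal r \<longleftrightarrow> real (card (A \<inter> {1..N})) < r * real N" if "N > 0" for N r
    using that by (simp add: f_def divide_less_eq mult.commute)
  show ?thesis
    unfolding upper_dens_def f_def[symmetric]
  proof (intro iffI allI impI)
    fix r :: real
    assume "limsup f = 1" "r < 1"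
    show "\<exists>\<^sub>F N in sequentially. r * real N < real (card (A \<inter> {1..N}))"
    proof (rule ccontr)
      assume "\<not> ?thesis"
      then have "\<forall>\<^sub>F N in sequentially. real (card (A \<inter> {1..N})) \<le> r * real N"
        by (simp add: not_frequently not_less)
      then have "\<forall>\<^sub>F N in sequentially. f N \<le> ereal r"
        using eventually_gt_at_top[of 0]
        by eventually_elim (simp add: f_def divide_le_eq mult.commute)
      then have "limsup f \<le> r"
        by (rule Limsup_bounded)
      with \<open>limsup f = 1\<close> \<open>r < 1\<close> show False
        by simp
    qed
  next
    assume freq: "\<forall>r<1. \<exists>\<^sub>F N in sequentially. r * real N < real (card (A \<inter> {1..N}))"
    show "limsup f = 1"
    proof (rule antisym[OF le_1], rule ccontr)
      assume "\<not> 1 \<le> limsup f"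
      then obtain r where r: "limsup f < ereal r" "r < 1"
        using ereal_dense2[of "limsup f" 1] by (auto simp: not_le)
      have ev: "\<forall>\<^sub>F N in sequentially. real (card (A \<inter> {1..N})) < r * real N"
        using Limsup_lessD[OF r(1)] eventually_gt_at_top[of 0]
        by eventually_elim (simp add: ratio)
      have "\<exists>\<^sub>F N in sequentially. r * real N < real (card (A \<inter> {1..N}))"
        using freq r(2) by blast
      from frequently_eventually_conj[OF this ev] show False
        by (auto dest: frequently_ex)
    qed
  qed
qed

lemma lower_dens_eq_0_iff:
  "lower_dens A = 0 \<longleftrightarrow> (\<forall>r>0. \<exists>\<^sub>F N in sequentially. real (card (A \<inter> {1..N})) < r * real N)"
proof -
  define f where "f N = ereal (card (A \<inter> {1..N}) / N)" for N
  have ge_0: "0 \<le> liminf f"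
    by (intro Liminf_bounded) (simp add: f_def)
  have ratio: "ereal r < f N \<longleftrightarrow> r * real N < real (card (A \<inter> {1..N}))" if "N > 0" for N r
    using that by (simp add: f_def less_divide_eq mult.commute)
  show ?thesis
    unfolding lower_dens_def f_def[symmetric]
  proof (intro iffI allI impI)
    fix r :: real
    assume "liminf f = 0" "0 < r"
    show "\<exists>\<^sub>F N in sequentially. real (card (A \<inter> {1..N})) < r * real N"
    proof (rule ccontr)
      assume "\<not> ?thesis"
      then have "\<forall>\<^sub>F N in sequentially. r * real N \<le> real (card (A \<inter> {1..N}))"
        by (simp add: not_frequently not_less)
      then have "\<forall>\<^sub>F N in sequentially. ereal r \<le> f N"
        using eventually_gt_at_top[of 0]
        by eventually_elim (simp add: f_def le_divide_eq mult.commute)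
      then have "r \<le> liminf f"
        by (rule Liminf_bounded)
      with \<open>liminf f = 0\<close> \<open>0 < r\<close> show False
        by simp
    qed
  next
    assume freq: "\<forall>r>0. \<exists>\<^sub>F N in sequentially. real (card (A \<inter> {1..N})) < r * real N"
    show "liminf f = 0"
    proof (rule antisym[OF _ ge_0], rule ccontr)
      assume "\<not> liminf f \<le> 0"
      then obtain r where r: "ereal r < liminf f" "0 < r"
        using ereal_dense2[of 0 "liminf f"] by (auto simp: not_le)
      have ev: "\<forall>\<^sub>F N in sequentially. r * real N < real (card (A \<inter> {1..N}))"
        using less_LiminfD[OF r(1)] eventually_gt_at_top[of 0]
        by eventually_elim (simp add: ratio)
      have "\<exists>\<^sub>F N in sequentially. real (card (A \<inter> {1..N})) < r * real N"
        using freq r(2) by blast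
      from frequently_eventually_conj[OF this ev] show False
        by (auto dest: frequently_ex)
    qed
  qed
qed

lemma card_Compl_Int_atLeastAtMost:
  "real (card (- A \<inter> {1..N})) = real N - real (card (A \<inter> {1..N}))"
proof -
  have "- A \<inter> {1..N} = {1..N} - A \<inter> {1..N}"
    by auto
  moreover have "card ({1..N} - A \<inter> {1..N}) = card {1..N} - card (A \<inter> {1..N})"
    by (rule card_Diff_subset) auto
  ultimately show ?thesis
    using card_Int_atLeastAtMost_le[of A N] by simp
qed

lemma lower_dens_eq_0_iff_upper_dens_Compl: "lower_dens A = 0 \<longleftrightarrow> upper_dens (- A) = 1"
proof -
  have shift: "r * real N < real (card (- A \<inter> {1..N})) \<longleftrightarrow>
      real (card (A \<inter> {1..N})) < (1 - r) * real N" for r N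
    unfolding card_Compl_Int_atLeastAtMost by (simp add: algebra_simps)
  show ?thesis
    unfolding lower_dens_eq_0_iff upper_dens_eq_1_iff shift
  proof (intro iffI allI impI)
    fix r :: real
    assume "\<forall>s>0. \<exists>\<^sub>F N in sequentially. real (card (A \<inter> {1..N})) < s * real N" "r < 1"
    then show "\<exists>\<^sub>F N in sequentially. real (card (A \<inter> {1..N})) < (1 - r) * real N"
      by simp
  next
    fix s :: real
    assume "\<forall>r<1. \<exists>\<^sub>F N in sequentially. real (card (A \<inter> {1..N})) < (1 - r) * real N" "0 < s"
    then show "\<exists>\<^sub>F N in sequentially. real (card (A \<inter> {1..N})) < s * real N"
      by (auto dest: spec[of _ "1 - s"])
  qed
qed

lemma card_Int_atLeastAtMost_le_shift:
  assumes "\<And>j. L \<le> j \<Longrightarrow> j \<in> A \<Longrightarrow> j \<in> B"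
  shows "card (A \<inter> {1..N}) \<le> card (B \<inter> {1..N}) + L"
proof -
  have "card (A \<inter> {1..N}) \<le> card (B \<inter> {1..N} \<union> {..<L})"
    using assms by (intro card_mono) (auto simp: not_le)
  also have "\<dots> \<le> card (B \<inter> {1..N}) + L"
    using card_Un_le[of "B \<inter> {1..N}" "{..<L}"] by simp
  finally show ?thesis .
qed

lemma upper_dens_eq_1_mono:
  assumes A: "upper_dens A = 1" and AB: "\<And>j. L \<le> j \<Longrightarrow> j \<in> A \<Longrightarrow> j \<in> B"
  shows "upper_dens B = 1"
  unfolding upper_dens_eq_1_iff
proof (intro allI impI)
  fix r :: real
  assume "r < 1"
  define r' where "r' = (1 + r) / 2"
  have "r < r'" "r' < 1"
    using \<open>r < 1\<close> by (auto simp: r'_def)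
  obtain N0 :: nat where N0: "L / (r' - r) < N0"
    using reals_Archimedean2 by blast
  have ev: "\<forall>\<^sub>F N in sequentially. real L < (r' - r) * real N"
    using eventually_ge_at_top[of N0]
  proof eventually_elim
    case (elim N)
    with N0 \<open>r < r'\<close> show ?case
      by (simp add: divide_less_eq mult.commute order_less_le_trans)
  qed
  have "\<exists>\<^sub>F N in sequentially. r' * real N < real (card (A \<inter> {1..N}))"
    using A \<open>r' < 1\<close> unfolding upper_dens_eq_1_iff by blast
  from frequently_eventually_conj[OF this ev]
  show "\<exists>\<^sub>F N in sequentially. r * real N < real (card (B \<inter> {1..N}))"
  proof (rule frequently_elim1)
    fix N
    assume "real L < (r' - r) * real N \<and> r' * real N < real (card (A \<inter> {1..N}))"
    moreover have "card (A \<inter> {1..N}) \<le> card (B \<inter> {1..N}) + L"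
      using AB by (rule card_Int_atLeastAtMost_le_shift)
    then have "real (card (A \<inter> {1..N})) \<le> real (card (B \<inter> {1..N})) + real L"
      by (metis of_nat_add of_nat_mono)
    ultimately show "r * real N < real (card (B \<inter> {1..N}))"
      by (simp add: algebra_simps)
  qed
qed

lemma upper_dens_eq_1_imp_nonempty:
  assumes "upper_dens A = 1"
  shows "A \<noteq> {}"
proof -
  have "\<exists>\<^sub>F N in sequentially. 0 * real N < real (card (A \<inter> {1..N}))"
    using assms[unfolded upper_dens_eq_1_iff, rule_format, of 0] by simp
  then obtain N where "0 < card (A \<inter> {1..N})"
    by (auto dest: frequently_ex)
  then show ?thesis
    by auto
qed

lemma lower_dens_eq_0_window:
  assumes "lower_dens A = 0"
  shows "\<exists>N>b. real N \<le> 2 * real (card {n\<in>{1..N}. m + n \<notin> A})"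
proof -
  have "\<exists>\<^sub>F N in sequentially. real (card (A \<inter> {1..N})) < 1 / 4 * real N"
    using assms[unfolded lower_dens_eq_0_iff, rule_format, of "1 / 4"] by simp
  then obtain N0 where N0: "4 * m + b + 4 \<le> N0" "4 * real (card (A \<inter> {1..N0})) < real N0"
    unfolding frequently_sequentially by force
  define N where "N = N0 - m"
  have "{n\<in>{1..N}. m + n \<in> A} \<subseteq> (\<lambda>j. j - m) ` (A \<inter> {1..N0})"
    by (auto simp: N_def image_iff intro!: bexI[of _ "m + _"])
  then have "card {n\<in>{1..N}. m + n \<in> A} \<le> card ((\<lambda>j. j - m) ` (A \<inter> {1..N0}))"
    by (intro card_mono) auto
  also have "\<dots> \<le> card (A \<inter> {1..N0})"
    by (rule card_image_le) simp
  finally have hits: "card {n\<in>{1..N}. m + n \<in> A} \<le> card (A \<inter> {1..N0})" .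
  have "{n\<in>{1..N}. m + n \<notin> A} = {1..N} - {n\<in>{1..N}. m + n \<in> A}"
    by auto
  moreover have "card ({1..N} - {n\<in>{1..N}. m + n \<in> A}) = N - card {n\<in>{1..N}. m + n \<in> A}"
    by (subst card_Diff_subset) auto
  moreover have "card {n\<in>{1..N}. m + n \<in> A} \<le> card {1..N}"
    by (rule card_mono) auto
  ultimately show ?thesis
    using N0 hits by (intro exI[of _ N]) (auto simp: N_def)
qed

section \<open>Growth counts\<close>

definition growth_count :: "(nat \<Rightarrow> real) \<Rightarrow> real \<Rightarrow> nat \<Rightarrow> nat \<Rightarrow> nat" where
  "growth_count R c s t = card {n\<in>{1..t}. c * R s \<le> R (s + n)}"

lemma growth_count_le: "growth_count R c s t \<le> t"
proof -
  have "growth_count R c s t \<le> card {1..t}"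
    unfolding growth_count_def by (rule card_mono) auto
  then show ?thesis
    by simp
qed

lemma growth_count_split:
  assumes "j \<le> t"
  shows "growth_count R c s t = growth_count R c s j + card {i\<in>{1..t - j}. c * R s \<le> R (s + j + i)}"
proof -
  let ?P = "\<lambda>n. c * R s \<le> R (s + n)"
  have "{n\<in>{Suc j..t}. ?P n} = (\<lambda>i. j + i) ` {i\<in>{1..t - j}. ?P (j + i)}"
  proof (intro set_eqI iffI)
    fix n
    assume "n \<in> {n\<in>{Suc j..t}. ?P n}"
    then show "n \<in> (\<lambda>i. j + i) ` {i\<in>{1..t - j}. ?P (j + i)}"
      by (intro image_eqI[of _ _ "n - j"]) auto
  qed auto
  moreover have "{n\<in>{1..t}. ?P n} = {n\<in>{1..j}. ?P n} \<union> {n\<in>{Suc j..t}. ?P n}"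
    using assms by auto
  ultimately have "{n\<in>{1..t}. ?P n} = {n\<in>{1..j}. ?P n} \<union> (\<lambda>i. j + i) ` {i\<in>{1..t - j}. ?P (j + i)}"
    by simp
  moreover have "card ((\<lambda>i. j + i) ` {i\<in>{1..t - j}. ?P (j + i)}) = card {i\<in>{1..t - j}. ?P (j + i)}"
    by (rule card_image) simp
  moreover have "card ({n\<in>{1..j}. ?P n} \<union> (\<lambda>i. j + i) ` {i\<in>{1..t - j}. ?P (j + i)})
      = card {n\<in>{1..j}. ?P n} + card ((\<lambda>i. j + i) ` {i\<in>{1..t - j}. ?P (j + i)})"
    by (rule card_Un_disjoint) auto
  ultimately show ?thesis
    unfolding growth_count_def by (simp add: add.assoc)
qed

lemma growth_count_Suc:
  "growth_count R c s (Suc t) = growth_count R c s t + (if c * R s \<le> R (s + Suc t) then 1 else 0)"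
proof -
  have "{i\<in>{1..Suc t - t}. c * R s \<le> R (s + t + i)} = (if c * R s \<le> R (s + Suc t) then {1} else {})"
    by auto
  then show ?thesis
    using growth_count_split[of t "Suc t" R c s] by simp
qed

lemma bounded_growth_pow:
  fixes R :: "nat \<Rightarrow> real"
  assumes growth: "\<And>n. R (Suc n) \<le> M * R n" and "0 \<le> M"
  shows "R (s + n) \<le> M ^ n * R s"
proof (induction n)
  case (Suc n)
  have "R (s + Suc n) \<le> M * R (s + n)"
    using growth[of "s + n"] by simp
  also have "\<dots> \<le> M * (M ^ n * R s)"
    using Suc \<open>0 \<le> M\<close> by (rule mult_left_mono)
  finally show ?case
    by (simp add: algebra_simps)
qed simp

lemma bounded_growth_pos:
  fixes R :: "nat \<Rightarrow> real"
  assumes "0 < R (s + n)" and nonneg: "\<And>n. 0 \<le> R n"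
    and growth: "\<And>n. R (Suc n) \<le> M * R n" and "0 \<le> M"
  shows "0 < R s"
  using assms(1) nonneg[of s] bounded_growth_pow[where R = R, OF growth \<open>0 \<le> M\<close>, of s n]
  by (cases "R s = 0") auto

lemma last_true_before:
  fixes P :: "nat \<Rightarrow> bool"
  assumes "P 0" "\<not> P t"
  obtains j where "j < t" "P j" "\<And>n. j < n \<Longrightarrow> n \<le> t \<Longrightarrow> \<not> P n"
proof -
  define j where "j = Max {j\<in>{0..t}. P j}"
  have "j \<in> {j\<in>{0..t}. P j}"
    unfolding j_def using assms(1) by (intro Max_in) auto
  moreover have "\<not> P n" if "j < n" "n \<le> t" for n
  proof
    assume "P n"
    then have "n \<le> j"
      unfolding j_def using that(2) by (intro Max_ge) auto
    with that(1) show False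
      by simp
  qed
  ultimately show thesis
    using assms(2) that by (metis atLeastAtMost_iff le_neq_implies_less mem_Collect_eq)
qed

lemma growth_count_eq_0:
  fixes R :: "nat \<Rightarrow> real"
  assumes growth: "\<And>n. R (Suc n) \<le> M * R n" and "1 \<le> M" and "M ^ tmin < K"
    and "t \<le> tmin" and "0 < R s"
  shows "growth_count R K s t = 0"
proof -
  have "R (s + n) < K * R s" if "n \<le> t" for n
  proof -
    have "R (s + n) \<le> M ^ n * R s"
      using growth \<open>1 \<le> M\<close> by (intro bounded_growth_pow) auto
    also have "\<dots> \<le> M ^ tmin * R s"
      using that assms by (intro mult_right_mono power_increasing) auto
    also have "\<dots> < K * R s"
      using assms by simp
    finally show ?thesis .
  qed
  then have "{n\<in>{1..t}. K * R s \<le> R (s + n)} = {}"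
    by (auto simp: not_le[symmetric])
  then show ?thesis
    unfolding growth_count_def by simp
qed

text \<open>Split at the last time \<open>s + j\<close> with \<open>R (s + j) < K * R s\<close>: before it use induction on
  \<open>t\<close>; after it every time counts for growth by \<open>K\<close>, and growth by \<open>K\<^sup>k\<^sup>+\<^sup>1\<close> relative to
  \<open>R s\<close> implies growth by \<open>K\<^sup>k\<close> relative to \<open>R (s + j)\<close>.\<close>
lemma growth_count_refine:
  fixes R :: "nat \<Rightarrow> real"
  assumes nonneg: "\<And>n. 0 \<le> R n" and growth: "\<And>n. R (Suc n) \<le> M * R n" and "0 \<le> M"
    and "1 < K"
    and IH: "\<And>s t. 0 < R s \<Longrightarrow> real (growth_count R (K ^ k) s t) \<le> c * real t"
    and "0 < R s"
  shows "real (growth_count R (K ^ Suc k) s t) \<le> c * real (growth_count R K s t)"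
proof (induction t rule: less_induct)
  case (less t)
  have K_le: "K * R s \<le> K ^ Suc k * R s"
    using \<open>1 < K\<close> \<open>0 < R s\<close> power_increasing[of 1 "Suc k" K] by (intro mult_right_mono) auto
  show ?case
  proof (cases "K * R s \<le> R (s + t)")
    case False
    show ?thesis
    proof (cases t)
      case (Suc t')
      then have "\<not> K ^ Suc k * R s \<le> R (s + Suc t')" "\<not> K * R s \<le> R (s + Suc t')"
        using False K_le by auto
      then show ?thesis
        using less[of t'] Suc by (simp add: growth_count_Suc)
    qed (simp add: growth_count_def)
  next
    case True
    have "R s < K * R s"
      using \<open>1 < K\<close> \<open>0 < R s\<close> by simp
    then obtain j where "j < t" and j: "R (s + j) < K * R s"
      and after_j: "\<And>n. j < n \<Longrightarrow> n \<le> t \<Longrightarrow> K * R s \<le> R (s + n)"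
      using last_true_before[of "\<lambda>j. R (s + j) < K * R s" t] True by (auto simp: not_less)
    have "0 < K * R s"
      using \<open>1 < K\<close> \<open>0 < R s\<close> by simp
    moreover have "s + j + (t - j) = s + t"
      using \<open>j < t\<close> by simp
    ultimately have "0 < R (s + j + (t - j))"
      using True by simp
    then have "0 < R (s + j)"
      using nonneg growth \<open>0 \<le> M\<close> by (rule bounded_growth_pos)
    have "card {i\<in>{1..t - j}. K ^ Suc k * R s \<le> R (s + j + i)}
        \<le> growth_count R (K ^ k) (s + j) (t - j)"
      unfolding growth_count_def
    proof (intro card_mono subsetI)
      fix i
      assume "i \<in> {i\<in>{1..t - j}. K ^ Suc k * R s \<le> R (s + j + i)}"
      moreover have "K ^ k * R (s + j) \<le> K ^ k * (K * R s)"
        using j \<open>1 < K\<close> by (intro mult_left_mono) auto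
      ultimately show "i \<in> {n\<in>{1..t - j}. K ^ k * R (s + j) \<le> R (s + j + n)}"
        by (auto simp: mult.assoc mult.left_commute)
    qed simp
    then have tail: "real (card {i\<in>{1..t - j}. K ^ Suc k * R s \<le> R (s + j + i)}) \<le> c * real (t - j)"
      using IH[OF \<open>0 < R (s + j)\<close>, of "t - j"] by linarith
    have "{i\<in>{1..t - j}. K * R s \<le> R (s + j + i)} = {1..t - j}"
      using after_j by (auto simp: add.assoc)
    then have "growth_count R K s t = growth_count R K s j + (t - j)"
      using growth_count_split[of j t R K s] \<open>j < t\<close> by simp
    moreover have "growth_count R (K ^ Suc k) s t
        = growth_count R (K ^ Suc k) s j + card {i\<in>{1..t - j}. K ^ Suc k * R s \<le> R (s + j + i)}"
      using \<open>j < t\<close> by (intro growth_count_split) simp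
    ultimately show ?thesis
      using less[OF \<open>j < t\<close>] tail by (simp add: algebra_simps)
  qed
qed

lemma growth_count_decay:
  fixes R :: "nat \<Rightarrow> real"
  assumes nonneg: "\<And>n. 0 \<le> R n" and growth: "\<And>n. R (Suc n) \<le> M * R n" and "0 \<le> M"
    and "1 < K" and "0 \<le> q"
    and sparse: "\<And>s t. 0 < R s \<Longrightarrow> real (growth_count R K s t) \<le> q * real t"
    and "0 < R s"
  shows "real (growth_count R (K ^ k) s t) \<le> q ^ k * real t"
  using \<open>0 < R s\<close>
proof (induction k arbitrary: s t)
  case 0
  then show ?case
    using growth_count_le[of R "K ^ 0" s t] by simp
next
  case (Suc k)
  have "real (growth_count R (K ^ Suc k) s t) \<le> q ^ k * real (growth_count R K s t)"
    using nonneg growth \<open>0 \<le> M\<close> \<open>1 < K\<close> Suc.IH Suc.prems by (rule growth_count_refine)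
  also have "\<dots> \<le> q ^ k * (q * real t)"
    using sparse[OF Suc.prems] \<open>0 \<le> q\<close> by (intro mult_left_mono) auto
  finally show ?case
    by (simp add: algebra_simps)
qed

text \<open>Otherwise \<open>growth_count_decay\<close> would bound the proportion of times of growth by
  \<open>K\<^sup>m\<close> by \<open>(1 - \<eta>)\<^sup>m < \<epsilon>\<close>; windows shorter than \<open>tmin\<close> cannot show growth by \<open>K\<close>
  at all since \<open>M ^ tmin < K\<close>.\<close>
lemma exists_expanding_window:
  fixes R :: "nat \<Rightarrow> real"
  assumes nonneg: "\<And>n. 0 \<le> R n" and growth: "\<And>n. R (Suc n) \<le> M * R n" and "1 \<le> M"
    and "M ^ tmin < K" and "\<eta> \<le> 1" and "(1 - \<eta>) ^ m < \<epsilon>"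
    and "0 < R 0" and "0 < N" and count: "\<epsilon> * real N \<le> real (growth_count R (K ^ m) 0 N)"
  shows "\<exists>s t. tmin \<le> t \<and> 0 < R s \<and> (1 - \<eta>) * real t \<le> real (growth_count R K s t)"
proof (rule ccontr)
  assume "\<not> ?thesis"
  then have short: "real (growth_count R K s t) < (1 - \<eta>) * real t" if "tmin \<le> t" "0 < R s" for s t
    using that by (meson not_le)
  have "1 < K"
    using \<open>1 \<le> M\<close> \<open>M ^ tmin < K\<close> one_le_power[of M tmin] by linarith
  have sparse: "real (growth_count R K s t) \<le> (1 - \<eta>) * real t" if "0 < R s" for s t
  proof (cases "tmin \<le> t")
    case False
    then have "growth_count R K s t = 0"
      using growth \<open>1 \<le> M\<close> \<open>M ^ tmin < K\<close> that by (intro growth_count_eq_0) auto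
    with \<open>\<eta> \<le> 1\<close> show ?thesis
      by simp
  qed (use short that in fastforce)
  have "real (growth_count R (K ^ m) 0 N) \<le> (1 - \<eta>) ^ m * real N"
    using nonneg growth _ \<open>1 < K\<close> _ sparse \<open>0 < R 0\<close> by (rule growth_count_decay) (use assms in auto)
  also have "\<dots> < \<epsilon> * real N"
    using assms by (intro mult_strict_right_mono) auto
  finally show False
    using count by simp
qed

lemma bshift_pow:
  assumes "x 0 = 0"
  shows "(bshift ^^ n) x = (\<lambda>m. if m = 0 then 0 else x (m + n))"
proof (induction n)
  case (Suc n)
  then show ?case
    by (simp add: bshift_def fun_eq_iff)
qed (use assms in auto)

lemma bshift_pow_diff: "(bshift ^^ n) (x - y) = (bshift ^^ n) x - (bshift ^^ n) y"
  by (induction n) (simp_all add: bshift_def fun_eq_iff)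

lemma mem_lpv_space_iff:
  "x \<in> lpv_space p v \<longleftrightarrow> x 0 = 0 \<and> summable (\<lambda>n. norm (x n) powr p * v n)"
  by (simp add: lpv_space_def)

definition profile :: "(nat \<Rightarrow> real) \<Rightarrow> nat \<Rightarrow> bool" where
  "profile a U \<longleftrightarrow> (\<forall>j. 0 \<le> a j) \<and> a 0 = 0 \<and> (\<forall>j>U. a j = 0)"

definition coeff_profile :: "nat set \<Rightarrow> (nat \<Rightarrow> complex) \<Rightarrow> nat \<Rightarrow> real" where
  "coeff_profile S C j = (if j \<in> S then norm (C j) else 0)"

definition shift_ratio :: "(nat \<Rightarrow> real) \<Rightarrow> nat set \<Rightarrow> (nat \<Rightarrow> complex) \<Rightarrow> nat \<Rightarrow> real" where
  "shift_ratio v S C n =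
     (\<Sum>j\<in>S. norm (C j) * vext v (int j - int n)) / (\<Sum>j\<in>S. norm (C j) * v j)"

definition dc_criterion :: "(nat \<Rightarrow> real) \<Rightarrow> bool" where
  "dc_criterion v \<longleftrightarrow> (\<exists>\<epsilon>::real. \<exists>N :: nat \<Rightarrow> nat. \<exists>S :: nat \<Rightarrow> nat set. \<exists>C :: nat \<Rightarrow> nat \<Rightarrow> complex.
     \<epsilon> > 0 \<and> strict_mono_on {1..} N \<and> (\<forall>k\<ge>1. N k \<ge> 1) \<and>
     (\<forall>k\<ge>1. finite (S k) \<and> S k \<noteq> {} \<and> S k \<subseteq> {1..} \<and> (\<forall>j\<in>S k. C k j \<noteq> 0)) \<and>
     (\<forall>k\<ge>1. real (card {n\<in>{1..N k}. shift_ratio v (S k) (C k) n \<ge> real k}) \<ge> real (N k) * \<epsilon>))"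

lemma profile_coeff_profile:
  assumes "finite S" "S \<subseteq> {1..}"
  shows "profile (coeff_profile S C) (Max S)"
  using assms by (auto simp: profile_def coeff_profile_def dest: Max_ge)

lemma sum_vext_shift:
  fixes a :: "nat \<Rightarrow> real"
  shows "(\<Sum>j\<in>{1..n + U}. a j * vext v (int j - int n)) = (\<Sum>m\<in>{1..U}. a (m + n) * v m)"
proof -
  have "(\<Sum>j\<in>{1..n + U}. a j * vext v (int j - int n))
      = (\<Sum>j\<in>{1..n}. a j * vext v (int j - int n)) + (\<Sum>j\<in>{1 + n..U + n}. a j * vext v (int j - int n))"
    by (subst sum.ub_add_nat) (simp_all add: add.commute)
  also have "(\<Sum>j\<in>{1..n}. a j * vext v (int j - int n)) = 0"
    by (intro sum.neutral) (auto simp: vext_def)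
  also have "(\<Sum>j\<in>{1 + n..U + n}. a j * vext v (int j - int n))
      = (\<Sum>m\<in>{1..U}. a (m + n) * vext v (int (m + n) - int n))"
    by (rule sum.shift_bounds_cl_nat_ivl)
  also have "\<dots> = (\<Sum>m\<in>{1..U}. a (m + n) * v m)"
    by (intro sum.cong) (auto simp: vext_def)
  finally show ?thesis
    by simp
qed

lemma coeff_profile_truncation:
  "coeff_profile {j\<in>{1..L}. w j \<noteq> 0} (\<lambda>j. complex_of_real (norm (w j) powr p))
    = (\<lambda>j. if j \<in> {1..L} then norm (w j) powr p else 0)"
  by (auto simp: coeff_profile_def fun_eq_iff)

definition dc_block :: "(nat \<Rightarrow> real) \<Rightarrow> nat \<Rightarrow> nat \<times> nat set \<times> (nat \<Rightarrow> complex) \<Rightarrow> bool" where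
  "dc_block v k B \<longleftrightarrow> (case B of (N, S, C) \<Rightarrow>
     finite S \<and> S \<noteq> {} \<and> S \<subseteq> {1..} \<and> (\<forall>j\<in>S. C j \<noteq> 0) \<and>
     real N \<le> 2 * real (card {n\<in>{1..N}. real k \<le> shift_ratio v S C n}))"

lemma dc_blocks_imp_dc_criterion:
  assumes block: "\<And>k b. \<exists>N S C. b < N \<and> dc_block v k (N, S, C)"
  shows "dc_criterion v"
proof -
  have "\<exists>B. \<forall>k. dc_block v k (B k) \<and> fst (B k) < fst (B (Suc k))"
  proof (rule dependent_nat_choice)
    show "\<exists>B. dc_block v 0 B"
      using block[where b = 0 and k = 0] by blast
    show "\<exists>B'. dc_block v (Suc k) B' \<and> fst B < fst B'" for B k
      using block[where b = "fst B" and k = "Suc k"] by fastforce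
  qed
  then obtain B where B: "\<And>k. dc_block v k (B k)" and "\<And>k. fst (B k) < fst (B (Suc k))"
    by blast
  then have mono: "strict_mono (\<lambda>k. fst (B k))"
    by (intro strict_monoI_Suc)
  show ?thesis
    unfolding dc_criterion_def
  proof (intro exI[of _ "1 / 2"] exI[of _ "\<lambda>k. fst (B k)"] exI[of _ "\<lambda>k. fst (snd (B k))"]
      exI[of _ "\<lambda>k. snd (snd (B k))"] conjI allI impI)
    show "0 < (1 / 2 :: real)"
      by simp
    show "strict_mono_on {1..} (\<lambda>k. fst (B k))"
      using mono by (rule monotone_on_subset) simp
    fix k :: nat
    assume "1 \<le> k"
    then show "1 \<le> fst (B k)"
      using strict_monoD[OF mono, of 0 k] by simp
    show "finite (fst (snd (B k)))" "fst (snd (B k)) \<noteq> {}" "fst (snd (B k)) \<subseteq> {1..}"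
      "\<forall>j\<in>fst (snd (B k)). snd (snd (B k)) j \<noteq> 0"
      "real (fst (B k)) * (1 / 2)
        \<le> real (card {n\<in>{1..fst (B k)}. real k \<le> shift_ratio v (fst (snd (B k))) (snd (snd (B k))) n})"
      using B[of k] by (auto simp: dc_block_def split: prod.splits)
  qed
qed

locale weighted_backward_shift =
  fixes p :: real and v :: "nat \<Rightarrow> real" and M :: real
  assumes p_pos: "0 < p"
    and v_pos: "\<And>n. 1 \<le> n \<Longrightarrow> 0 < v n"
    and M_ge_1: "1 \<le> M"
    and v_le: "\<And>n. 1 \<le> n \<Longrightarrow> v n \<le> M * v (Suc n)"
begin

definition normp :: "(nat \<Rightarrow> complex) \<Rightarrow> real" where
  "normp x = (\<Sum>n. norm (x n) powr p * v n)"

lemma lpv_norm_eq: "lpv_norm p v x = normp x powr (1 / p)"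
  by (simp add: lpv_norm_def normp_def)

lemma lpv_term_nonneg: "x 0 = 0 \<Longrightarrow> 0 \<le> norm (x n) powr p * v n"
  using v_pos[of n] by (cases "n = 0") auto

lemma normp_nonneg: "x \<in> lpv_space p v \<Longrightarrow> 0 \<le> normp x"
  unfolding normp_def mem_lpv_space_iff by (auto intro!: suminf_nonneg lpv_term_nonneg)

lemma lpv_space_diff:
  assumes "x \<in> lpv_space p v" "y \<in> lpv_space p v"
  shows "x - y \<in> lpv_space p v" and "normp (x - y) \<le> 2 powr p * (normp x + normp y)"
proof -
  have x: "x 0 = 0" "summable (\<lambda>n. norm (x n) powr p * v n)"
    and y: "y 0 = 0" "summable (\<lambda>n. norm (y n) powr p * v n)"
    using assms by (auto simp: mem_lpv_space_iff)
  have le: "norm ((x - y) n) powr p * v n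
      \<le> 2 powr p * (norm (x n) powr p * v n + norm (y n) powr p * v n)" for n
  proof (cases "n = 0")
    case False
    then have "0 < v n"
      using v_pos by simp
    with mult_left_mono[OF norm_diff_powr_le[of p "x n" "y n"], of "v n"] p_pos show ?thesis
      by (simp add: algebra_simps)
  qed (use x y in simp)
  have bound: "summable (\<lambda>n. 2 powr p * (norm (x n) powr p * v n + norm (y n) powr p * v n))"
    using x y by (intro summable_mult summable_add)
  have summable: "summable (\<lambda>n. norm ((x - y) n) powr p * v n)"
    using le lpv_term_nonneg[of "x - y"] x(1) y(1) by (intro summable_comparison_test[OF _ bound]) auto
  then show "x - y \<in> lpv_space p v"
    using x y by (simp add: mem_lpv_space_iff)
  have "normp (x - y) \<le> (\<Sum>n. 2 powr p * (norm (x n) powr p * v n + norm (y n) powr p * v n))"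
    unfolding normp_def by (rule suminf_le[OF le summable bound])
  also have "\<dots> = 2 powr p * (normp x + normp y)"
    unfolding normp_def using x y by (simp add: suminf_mult summable_add suminf_add[symmetric])
  finally show "normp (x - y) \<le> 2 powr p * (normp x + normp y)" .
qed

lemma lpv_space_scale:
  assumes "x \<in> lpv_space p v"
  shows "(\<lambda>n. c * x n) \<in> lpv_space p v" and "normp (\<lambda>n. c * x n) = norm c powr p * normp x"
proof -
  have eq: "norm (c * x n) powr p * v n = norm c powr p * (norm (x n) powr p * v n)" for n
    by (simp add: norm_mult powr_mult)
  show "(\<lambda>n. c * x n) \<in> lpv_space p v" "normp (\<lambda>n. c * x n) = norm c powr p * normp x"
    using assms unfolding mem_lpv_space_iff normp_def eq by (auto intro: summable_mult suminf_mult)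
qed

lemma lpv_space_add:
  assumes "x \<in> lpv_space p v" "y \<in> lpv_space p v"
  shows "(\<lambda>n. x n + y n) \<in> lpv_space p v"
proof -
  have "(\<lambda>n. x n + y n) = x - (\<lambda>n. (- 1) * y n)"
    by (simp add: fun_eq_iff)
  then show ?thesis
    using assms lpv_space_diff(1) lpv_space_scale(1) by metis
qed

lemma bshift_in_lpv_space:
  assumes "x \<in> lpv_space p v"
  shows "bshift x \<in> lpv_space p v" and "normp (bshift x) \<le> M * normp x"
proof -
  define g where "g n = norm (x n) powr p * v n" for n
  have g: "summable g" "\<And>n. 0 \<le> g n"
    using assms lpv_term_nonneg[of x] by (auto simp: g_def[abs_def] mem_lpv_space_iff)
  have le: "norm (bshift x m) powr p * v m \<le> M * g (Suc m)" for m
  proof (cases "m = 0")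
    case False
    then show ?thesis
      using mult_left_mono[OF v_le[of m], of "norm (x (Suc m)) powr p"]
      by (simp add: bshift_def g_def algebra_simps)
  qed (use g(2) M_ge_1 in \<open>simp add: bshift_def\<close>)
  have bound: "summable (\<lambda>m. M * g (Suc m))"
    using g by (intro summable_mult) (simp add: summable_Suc_iff)
  have summable: "summable (\<lambda>m. norm (bshift x m) powr p * v m)"
    using le lpv_term_nonneg[of "bshift x"] by (intro summable_comparison_test[OF _ bound]) (auto simp: bshift_def)
  then show "bshift x \<in> lpv_space p v"
    by (simp add: mem_lpv_space_iff bshift_def)
  have "normp (bshift x) \<le> (\<Sum>m. M * g (Suc m))"
    unfolding normp_def by (rule suminf_le[OF le summable bound])
  also have "\<dots> = M * (suminf g - g 0)"
    using g by (simp add: suminf_mult suminf_split_head summable_Suc_iff)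
  also have "\<dots> \<le> M * suminf g"
    using g(2)[of 0] M_ge_1 by (intro mult_left_mono) auto
  finally show "normp (bshift x) \<le> M * normp x"
    by (simp add: normp_def g_def[abs_def])
qed

lemma bshift_pow_in_lpv_space:
  assumes "x \<in> lpv_space p v"
  shows "(bshift ^^ n) x \<in> lpv_space p v" and "normp ((bshift ^^ n) x) \<le> M ^ n * normp x"
proof (induction n)
  case (Suc n)
  case 1
  then show ?case
    using Suc(1) bshift_in_lpv_space(1) by simp
next
  case (Suc n)
  case 2
  have "normp ((bshift ^^ Suc n) x) \<le> M * normp ((bshift ^^ n) x)"
    using Suc(1) bshift_in_lpv_space(2) by simp
  also have "\<dots> \<le> M * (M ^ n * normp x)"
    using Suc(2) M_ge_1 by (intro mult_left_mono) auto
  finally show ?case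
    by simp
qed (use assms in auto)

lemma lpv_dist_less_iff:
  assumes "x \<in> lpv_space p v" "y \<in> lpv_space p v" "0 < e"
  shows "lpv_dist p v x y < e \<longleftrightarrow> normp (x - y) < e powr p"
proof -
  have "0 \<le> normp (x - y)"
    using assms lpv_space_diff(1) normp_nonneg by blast
  with p_pos assms(3) show ?thesis
    by (simp add: lpv_dist_def lpv_norm_eq powr_inverse_less_iff)
qed

definition shift_mass :: "(nat \<Rightarrow> real) \<Rightarrow> nat \<Rightarrow> real" where
  "shift_mass a n = (\<Sum>m. (if m = 0 then 0 else a (m + n)) * v m)"

text \<open>Taking \<open>p\<close>-th roots makes \<open>normp ((bshift ^^ n) (profile_vec a)) = shift_mass a n\<close>
  linear in the profile \<open>a\<close>, which is what makes superpositions of profiles tractable.\<close>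
definition profile_vec :: "(nat \<Rightarrow> real) \<Rightarrow> nat \<Rightarrow> complex" where
  "profile_vec a m = (if m = 0 then 0 else complex_of_real (a m powr (1 / p)))"

lemma norm_bshift_pow_profile_vec:
  assumes "\<And>j. 0 \<le> a j"
  shows "norm ((bshift ^^ n) (profile_vec a) m) powr p * v m = (if m = 0 then 0 else a (m + n)) * v m"
  using assms[of "m + n"] p_pos by (simp add: bshift_pow profile_vec_def powr_powr)

lemma normp_bshift_pow_profile_vec:
  "(\<And>j. 0 \<le> a j) \<Longrightarrow> normp ((bshift ^^ n) (profile_vec a)) = shift_mass a n"
  by (simp add: normp_def shift_mass_def norm_bshift_pow_profile_vec)

lemma profile_vec_in_lpv_space_iff:
  assumes "\<And>j. 0 \<le> a j"
  shows "profile_vec a \<in> lpv_space p v \<longleftrightarrow> summable (\<lambda>m. (if m = 0 then 0 else a m) * v m)"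
proof -
  have "norm (profile_vec a m) powr p * v m = (if m = 0 then 0 else a m) * v m" for m
    using assms[of m] p_pos by (simp add: profile_vec_def powr_powr)
  then have "(\<lambda>m. norm (profile_vec a m) powr p * v m) = (\<lambda>m. (if m = 0 then 0 else a m) * v m)"
    by (rule ext)
  then show ?thesis
    unfolding mem_lpv_space_iff by (simp add: profile_vec_def)
qed

lemma shift_mass_finite:
  assumes "profile a U"
  shows "shift_mass a n = (\<Sum>m\<in>{1..U}. a (m + n) * v m)"
proof -
  have "shift_mass a n = (\<Sum>m\<in>{1..U}. (if m = 0 then 0 else a (m + n)) * v m)"
    unfolding shift_mass_def using assms by (intro suminf_finite) (auto simp: profile_def)
  then show ?thesis
    by simp
qed

lemma profile_vec_in_lpv_space:
  assumes "profile a U"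
  shows "profile_vec a \<in> lpv_space p v"
proof -
  have "summable (\<lambda>m. (if m = 0 then 0 else a m) * v m)"
    by (rule summable_finite[of "{1..U}"]) (use assms in \<open>auto simp: profile_def\<close>)
  with assms show ?thesis
    by (subst profile_vec_in_lpv_space_iff) (auto simp: profile_def)
qed

lemma shift_mass_nonneg:
  assumes "profile a U"
  shows "0 \<le> shift_mass a n"
  unfolding shift_mass_finite[OF assms] using assms v_pos
  by (intro sum_nonneg mult_nonneg_nonneg) (auto simp: profile_def less_imp_le)

lemma shift_mass_Suc_le:
  assumes "profile a U"
  shows "shift_mass a (Suc n) \<le> M * shift_mass a n"
proof -
  have nonneg: "\<And>j. 0 \<le> a j"
    using assms by (simp add: profile_def)
  have "(bshift ^^ n) (profile_vec a) \<in> lpv_space p v"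
    using assms by (intro bshift_pow_in_lpv_space(1) profile_vec_in_lpv_space)
  then have "normp (bshift ((bshift ^^ n) (profile_vec a))) \<le> M * normp ((bshift ^^ n) (profile_vec a))"
    by (rule bshift_in_lpv_space(2))
  then show ?thesis
    using normp_bshift_pow_profile_vec[of a n, OF nonneg] normp_bshift_pow_profile_vec[of a "Suc n", OF nonneg]
    by simp
qed

lemma shift_mass_le_pow: "profile a U \<Longrightarrow> shift_mass a n \<le> M ^ n * shift_mass a 0"
  using bounded_growth_pow[of "shift_mass a" M 0 n] shift_mass_Suc_le M_ge_1 by simp

lemma shift_mass_eq_0: "profile a U \<Longrightarrow> U \<le> n \<Longrightarrow> shift_mass a n = 0"
  by (auto simp: shift_mass_finite profile_def intro!: sum.neutral)

lemma profile_le_shift_mass: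
  assumes "profile a U" "1 \<le> m"
  shows "a m * v m \<le> shift_mass a 0"
proof (cases "m \<le> U")
  case True
  then have "a (m + 0) * v m \<le> (\<Sum>m'\<in>{1..U}. a (m' + 0) * v m')"
    using assms v_pos by (intro member_le_sum mult_nonneg_nonneg) (auto simp: profile_def less_imp_le)
  then show ?thesis
    using shift_mass_finite[OF assms(1)] by simp
qed (use assms shift_mass_nonneg in \<open>auto simp: profile_def\<close>)

lemma shift_mass_coeff_profile:
  assumes "finite S" "S \<subseteq> {1..}"
  shows "(\<Sum>j\<in>S. norm (C j) * vext v (int j - int n)) = shift_mass (coeff_profile S C) n"
proof -
  let ?a = "coeff_profile S C"
  have "S \<subseteq> {1..n + Max S}"
    using assms by (auto simp: subset_eq intro: trans_le_add2)
  then have "(\<Sum>j\<in>S. norm (C j) * vext v (int j - int n))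
      = (\<Sum>j\<in>{1..n + Max S}. ?a j * vext v (int j - int n))"
    by (intro sum.mono_neutral_cong_left) (auto simp: coeff_profile_def)
  also have "\<dots> = (\<Sum>m\<in>{1..Max S}. ?a (m + n) * v m)"
    by (rule sum_vext_shift)
  also have "\<dots> = shift_mass ?a n"
    by (simp add: shift_mass_finite[OF profile_coeff_profile[OF assms]])
  finally show ?thesis .
qed

lemma shift_ratio_eq:
  assumes "finite S" "S \<subseteq> {1..}"
  shows "shift_ratio v S C n = shift_mass (coeff_profile S C) n / shift_mass (coeff_profile S C) 0"
proof -
  have "(\<Sum>j\<in>S. norm (C j) * v j) = (\<Sum>j\<in>S. norm (C j) * vext v (int j))"
    using assms by (intro sum.cong) (auto simp: vext_def)
  also have "\<dots> = shift_mass (coeff_profile S C) 0"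
    using shift_mass_coeff_profile[OF assms, of C 0] by simp
  finally show ?thesis
    unfolding shift_ratio_def shift_mass_coeff_profile[OF assms] by simp
qed

lemma shift_mass_coeff_profile_pos:
  assumes "finite S" "S \<noteq> {}" "S \<subseteq> {1..}" "\<forall>j\<in>S. C j \<noteq> 0"
  shows "0 < shift_mass (coeff_profile S C) 0"
proof -
  have "0 < (\<Sum>j\<in>S. norm (C j) * vext v (int j))"
    using assms v_pos by (intro sum_pos) (auto simp: vext_def)
  then show ?thesis
    using shift_mass_coeff_profile[OF assms(1,3), of C 0] by simp
qed

lemma profile_normalized_shift:
  assumes "profile a U" "0 < c"
  shows "profile (\<lambda>j. if j = 0 then 0 else a (j + s) / c) U"
    and "shift_mass (\<lambda>j. if j = 0 then 0 else a (j + s) / c) n = shift_mass a (n + s) / c"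
proof -
  show P: "profile (\<lambda>j. if j = 0 then 0 else a (j + s) / c) U"
    using assms by (auto simp: profile_def)
  show "shift_mass (\<lambda>j. if j = 0 then 0 else a (j + s) / c) n = shift_mass a (n + s) / c"
    unfolding shift_mass_finite[OF P] shift_mass_finite[OF assms(1)]
    by (simp add: sum_divide_distrib algebra_simps)
qed

definition distr_irregular :: "(nat \<Rightarrow> complex) \<Rightarrow> bool" where
  "distr_irregular y \<longleftrightarrow> y \<in> lpv_space p v \<and>
     (\<forall>c. upper_dens {n. c \<le> normp ((bshift ^^ n) y)} = 1) \<and>
     (\<forall>\<delta>>0. upper_dens {n. normp ((bshift ^^ n) y) < \<delta>} = 1)"

end

section \<open>From the criterion to expanding profiles\<close>

context weighted_backward_shift
begin

definition expanding_profiles :: bool where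
  "expanding_profiles \<longleftrightarrow> (\<forall>K \<eta> tmin. 0 < \<eta> \<longrightarrow> \<eta> < 1 \<longrightarrow>
     (\<exists>a U t. profile a U \<and> tmin \<le> t \<and> shift_mass a 0 = 1 \<and>
        (1 - \<eta>) * real t \<le> real (card {n\<in>{1..t}. K \<le> shift_mass a n})))"

lemma normalized_expanding_profile:
  assumes "profile a U" "0 < shift_mass a s" "K' \<le> K"
    and "(1 - \<eta>) * real t \<le> real (growth_count (shift_mass a) K s t)"
  shows "\<exists>b. profile b U \<and> shift_mass b 0 = 1 \<and>
    (1 - \<eta>) * real t \<le> real (card {n\<in>{1..t}. K' \<le> shift_mass b n})"
proof (intro exI conjI)
  let ?b = "\<lambda>j. if j = 0 then 0 else a (j + s) / shift_mass a s"
  show "profile ?b U"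
    using assms(1,2) by (rule profile_normalized_shift)
  have b: "shift_mass ?b n = shift_mass a (n + s) / shift_mass a s" for n
    using assms(1,2) by (rule profile_normalized_shift)
  then show "shift_mass ?b 0 = 1"
    using assms by simp
  have "K' * shift_mass a s \<le> K * shift_mass a s"
    using assms(2,3) by (intro mult_right_mono) auto
  then have "K' * shift_mass a s \<le> shift_mass a (n + s)" if "K * shift_mass a s \<le> shift_mass a (s + n)" for n
    using that by (metis add.commute order_trans)
  then have "{n\<in>{1..t}. K * shift_mass a s \<le> shift_mass a (s + n)} \<subseteq> {n\<in>{1..t}. K' \<le> shift_mass ?b n}"
    using assms(2) by (auto simp: b le_divide_eq)
  then have "growth_count (shift_mass a) K s t \<le> card {n\<in>{1..t}. K' \<le> shift_mass ?b n}"
    unfolding growth_count_def by (intro card_mono) auto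
  with assms(4) show "(1 - \<eta>) * real t \<le> real (card {n\<in>{1..t}. K' \<le> shift_mass ?b n})"
    by linarith
qed

lemma card_shift_ratio_le_growth_count:
  assumes "finite S" "S \<noteq> {}" "S \<subseteq> {1..}" "\<forall>j\<in>S. C j \<noteq> 0" "c \<le> r"
  shows "card {n\<in>{1..N}. r \<le> shift_ratio v S C n}
    \<le> growth_count (shift_mass (coeff_profile S C)) c 0 N"
proof -
  let ?R = "shift_mass (coeff_profile S C)"
  have "0 < ?R 0"
    using assms by (intro shift_mass_coeff_profile_pos)
  have "c * ?R 0 \<le> ?R n" if "r \<le> shift_ratio v S C n" for n
  proof -
    have "r * ?R 0 \<le> ?R n"
      using that \<open>0 < ?R 0\<close> by (simp add: shift_ratio_eq[OF assms(1,3)] le_divide_eq)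
    moreover have "c * ?R 0 \<le> r * ?R 0"
      using assms(5) \<open>0 < ?R 0\<close> by (intro mult_right_mono) auto
    ultimately show ?thesis
      by linarith
  qed
  then show ?thesis
    unfolding growth_count_def by (intro card_mono) auto
qed

text \<open>Level \<open>k \<ge> K'\<^sup>m\<close> of (c) yields growth by \<open>K'\<^sup>m\<close> on an \<open>\<epsilon>\<close>-fraction of the times up to
  \<open>N k\<close>; \<open>exists_expanding_window\<close> turns this into growth by \<open>K' \<ge> K\<close> on a
  \<open>(1 - \<eta>)\<close>-fraction of a window of length at least \<open>tmin\<close>.\<close>
lemma dc_criterion_imp_expanding_profiles:
  assumes "dc_criterion v"
  shows expanding_profiles
proof -
  obtain \<epsilon> N S C where "0 < \<epsilon>" and N_pos: "\<forall>k\<ge>1. 1 \<le> N k"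
    and SC: "\<forall>k\<ge>1. finite (S k) \<and> S k \<noteq> {} \<and> S k \<subseteq> {1..} \<and> (\<forall>j\<in>S k. C k j \<noteq> 0)"
    and count: "\<forall>k\<ge>1. real (N k) * \<epsilon> \<le> real (card {n\<in>{1..N k}. real k \<le> shift_ratio v (S k) (C k) n})"
    using assms unfolding dc_criterion_def by blast
  show ?thesis
    unfolding expanding_profiles_def
  proof (intro allI impI)
    fix K \<eta> :: real and tmin :: nat
    assume "0 < \<eta>" "\<eta> < 1"
    define K' where "K' = max K (M ^ tmin + 1)"
    obtain m where m: "(1 - \<eta>) ^ m < \<epsilon>"
      using real_arch_pow_inv[OF \<open>0 < \<epsilon>\<close>, of "1 - \<eta>"] \<open>0 < \<eta>\<close> \<open>\<eta> < 1\<close> by auto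
    obtain k0 :: nat where "K' ^ m \<le> real k0"
      using real_arch_simple by blast
    define k where "k = max k0 1"
    have k: "1 \<le> k" "K' ^ m \<le> real k"
      using \<open>K' ^ m \<le> real k0\<close> by (auto simp: k_def)
    define a where "a = coeff_profile (S k) (C k)"
    have Sk: "finite (S k)" "S k \<noteq> {}" "S k \<subseteq> {1..}" "\<forall>j\<in>S k. C k j \<noteq> 0"
      using SC k(1) by auto
    have a: "profile a (Max (S k))" "0 < shift_mass a 0"
      unfolding a_def using profile_coeff_profile[OF Sk(1,3)] shift_mass_coeff_profile_pos[OF Sk] by auto
    have "\<epsilon> * real (N k) \<le> real (growth_count (shift_mass a) (K' ^ m) 0 (N k))"
      using count[rule_format, OF k(1)]
        of_nat_mono[OF card_shift_ratio_le_growth_count[OF Sk k(2), of "N k"], where 'a = real]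
      unfolding a_def by (simp add: mult.commute)
    then have "\<exists>s t. tmin \<le> t \<and> 0 < shift_mass a s \<and>
        (1 - \<eta>) * real t \<le> real (growth_count (shift_mass a) K' s t)"
      using shift_mass_nonneg[OF a(1)] shift_mass_Suc_le[OF a(1)] M_ge_1 \<open>\<eta> < 1\<close> m a(2) N_pos k(1)
      by (intro exists_expanding_window[where M = M and m = m and \<epsilon> = \<epsilon> and N = "N k"])
        (auto simp: K'_def)
    then obtain s t where "tmin \<le> t" "0 < shift_mass a s"
        "(1 - \<eta>) * real t \<le> real (growth_count (shift_mass a) K' s t)"
      by blast
    moreover have "K \<le> K'"
      by (simp add: K'_def)
    ultimately show "\<exists>a U t. profile a U \<and> tmin \<le> t \<and> shift_mass a 0 = 1 \<and>
        (1 - \<eta>) * real t \<le> real (card {n\<in>{1..t}. K \<le> shift_mass a n})"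
      using normalized_expanding_profile[OF a(1)] by blast
  qed
qed

end

section \<open>A distributionally irregular vector\<close>

locale expanding_weighted_shift = weighted_backward_shift +
  assumes expanding: expanding_profiles
begin

text \<open>A block chosen at horizon \<open>P\<close> gets weight \<open>4\<^sup>-\<^sup>(\<^sup>i\<^sup>+\<^sup>1\<^sup>) M\<^sup>-\<^sup>P\<close>, so that up to time \<open>P\<close> its
  contribution stays below \<open>4\<^sup>-\<^sup>(\<^sup>i\<^sup>+\<^sup>1\<^sup>)\<close>, and it must exceed \<open>(i + 1) / weight\<close> on most of
  its length, so that its weighted contribution exceeds \<open>i + 1\<close> there.\<close>
definition block_weight :: "nat \<Rightarrow> nat \<Rightarrow> real" where
  "block_weight i P = (1 / 4) ^ Suc i / M ^ P"

definition good_block :: "nat \<Rightarrow> nat \<Rightarrow> (nat \<Rightarrow> real) \<times> nat \<times> nat \<Rightarrow> bool" where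
  "good_block i P b \<longleftrightarrow> (case b of (a, U, t) \<Rightarrow> profile a U \<and> Suc i \<le> t \<and> shift_mass a 0 = 1 \<and>
     (1 - 1 / real (i + 2)) * real t
       \<le> real (card {n\<in>{1..t}. real (Suc i) / block_weight i P \<le> shift_mass a n}))"

definition block :: "nat \<Rightarrow> nat \<Rightarrow> (nat \<Rightarrow> real) \<times> nat \<times> nat" where
  "block i P = (SOME b. good_block i P b)"

lemma good_block_block: "good_block i P (block i P)"
proof -
  have "0 < 1 / real (i + 2)" "1 / real (i + 2) < 1"
    by auto
  then obtain a U t where "profile a U" "Suc i \<le> t" "shift_mass a 0 = 1"
    "(1 - 1 / real (i + 2)) * real t
       \<le> real (card {n\<in>{1..t}. real (Suc i) / block_weight i P \<le> shift_mass a n})"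
    using expanding unfolding expanding_profiles_def by blast
  then have "good_block i P (a, U, t)"
    by (simp add: good_block_def)
  then show ?thesis
    unfolding block_def by (rule someI)
qed

text \<open>The next
  horizon leaves room for a stretch of relative length \<open>1 - 1/(i+2)\<close> on which the blocks up to
  \<open>i\<close> have died out while the later ones are still negligible.\<close>
fun horizon :: "nat \<Rightarrow> nat" where
  "horizon 0 = 0"
| "horizon (Suc i) = (i + 2) * (max (horizon i) (fst (snd (block i (horizon i)))) + 1)"

definition block_profile :: "nat \<Rightarrow> nat \<Rightarrow> real" where
  "block_profile i = fst (block i (horizon i))"

definition block_support :: "nat \<Rightarrow> nat" where
  "block_support i = fst (snd (block i (horizon i)))"

definition block_length :: "nat \<Rightarrow> nat" where
  "block_length i = snd (snd (block i (horizon i)))"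

definition weight :: "nat \<Rightarrow> real" where
  "weight i = block_weight i (horizon i)"

definition block_end :: "nat \<Rightarrow> nat" where
  "block_end i = max (horizon i) (block_support i)"

definition irregular_profile :: "nat \<Rightarrow> real" where
  "irregular_profile m = (\<Sum>i. weight i * block_profile i m)"

lemma horizon_Suc_eq: "horizon (Suc i) = (i + 2) * (block_end i + 1)"
  by (simp add: block_end_def block_support_def)

declare horizon.simps(2)[simp del]

lemma block_end_le_horizon_Suc: "block_end i \<le> horizon (Suc i)"
  unfolding horizon_Suc_eq by simp

lemma horizon_mono: "i \<le> j \<Longrightarrow> horizon i \<le> horizon j"
proof (induction rule: dec_induct)
  case (step j)
  then show ?case
    using block_end_le_horizon_Suc[of j] by (simp add: block_end_def)
qed simp

lemma block_support_le_block_end: "j \<le> i \<Longrightarrow> block_support j \<le> block_end i"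
proof (cases "j = i")
  case False
  assume "j \<le> i"
  then have "block_support j \<le> horizon (Suc j)"
    using block_end_le_horizon_Suc[of j] by (simp add: block_end_def)
  also have "\<dots> \<le> horizon i"
    using \<open>j \<le> i\<close> False by (intro horizon_mono) simp
  finally show ?thesis
    by (simp add: block_end_def)
qed (simp add: block_end_def)

lemma
  shows profile_block_profile: "profile (block_profile i) (block_support i)"
    and block_length_ge: "Suc i \<le> block_length i"
    and shift_mass_block_profile_0: "shift_mass (block_profile i) 0 = 1"
    and block_profile_large: "(1 - 1 / real (i + 2)) * real (block_length i)
      \<le> real (card {n\<in>{1..block_length i}. real (Suc i) / weight i \<le> shift_mass (block_profile i) n})"
  using good_block_block[of i "horizon i"]
  by (auto simp: good_block_def block_profile_def block_support_def block_length_def weight_def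
      split: prod.splits)

lemma weight_pos: "0 < weight i"
  using M_ge_1 by (simp add: weight_def block_weight_def)

lemma weight_pow_le: "n \<le> horizon i \<Longrightarrow> weight i * M ^ n \<le> (1 / 4) ^ Suc i"
  using M_ge_1 power_increasing[of n "horizon i" M]
  by (simp add: weight_def block_weight_def divide_le_eq_1 field_simps)

lemma block_profile_nonneg: "0 \<le> block_profile i m"
  using profile_block_profile by (simp add: profile_def)

lemma block_profile_le: "1 \<le> m \<Longrightarrow> block_profile i m \<le> 1 / v m"
  using profile_le_shift_mass[OF profile_block_profile, of m i] shift_mass_block_profile_0 v_pos[of m]
  by (simp add: le_divide_eq)

lemma summable_weight_block_profile: "summable (\<lambda>i. weight i * block_profile i m)"
proof (cases "m = 0")
  case True
  then show ?thesis
    using profile_block_profile by (simp add: profile_def)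
next
  case False
  have le: "weight i * block_profile i m \<le> (1 / 4) ^ Suc i * (1 / v m)" for i
    using weight_pow_le[of 0 i] weight_pos block_profile_nonneg block_profile_le[of m i] False
    by (intro mult_mono) auto
  have "summable (\<lambda>i. (1 / 4) ^ Suc i * (1 / v m))"
    by (intro summable_mult2) (simp add: summable_geometric)
  then show ?thesis
  proof (rule summable_comparison_test')
    show "norm (weight i * block_profile i m) \<le> (1 / 4) ^ Suc i * (1 / v m)" for i
      using le[of i] weight_pos[of i] block_profile_nonneg[of i m] by simp
  qed
qed

lemma irregular_profile_nonneg: "0 \<le> irregular_profile m"
  unfolding irregular_profile_def using summable_weight_block_profile
  by (intro suminf_nonneg) (auto intro!: mult_nonneg_nonneg less_imp_le[OF weight_pos] block_profile_nonneg)

lemma shift_mass_irregular_profile_le: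
  shows "summable (\<lambda>m. (if m = 0 then 0 else irregular_profile (m + n)) * v m)"
    and "summable (\<lambda>i. weight i * shift_mass (block_profile i) n)"
    and "shift_mass irregular_profile n \<le> (\<Sum>i. weight i * shift_mass (block_profile i) n)"
proof -
  define g where "g i m = weight i * ((if m = 0 then 0 else block_profile i (m + n)) * v m)" for i m
  have g_nonneg: "0 \<le> g i m" for i m
    unfolding g_def using weight_pos[of i] block_profile_nonneg v_pos[of m]
    by (auto intro!: mult_nonneg_nonneg)
  have rows: "(\<Sum>i. g i m) = (if m = 0 then 0 else irregular_profile (m + n)) * v m" for m
    unfolding g_def irregular_profile_def
    using suminf_mult2[OF summable_weight_block_profile, of "m + n" "v m"] by (simp add: mult.assoc)
  have summable_rows: "summable (\<lambda>i. g i m)" for m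
    unfolding g_def using summable_mult2[OF summable_weight_block_profile, of "m + n" "v m"]
    by (cases "m = 0") (simp_all add: mult.assoc)
  have summable_block: "summable (\<lambda>m. (if m = 0 then 0 else block_profile i (m + n)) * v m)" for i
    using profile_block_profile[of i]
    by (intro summable_finite[of "{1..block_support i}"]) (auto simp: profile_def)
  have cols: "(\<Sum>m. g i m) = weight i * shift_mass (block_profile i) n" for i
    unfolding g_def shift_mass_def by (rule suminf_mult[OF summable_block])
  have le: "weight i * shift_mass (block_profile i) n \<le> (1 / 4) ^ Suc i * M ^ n" for i
  proof -
    have "weight i * shift_mass (block_profile i) n \<le> weight i * M ^ n"
      using shift_mass_le_pow[OF profile_block_profile, of i n] shift_mass_block_profile_0 weight_pos[of i]
      by simp
    also have "\<dots> \<le> (1 / 4) ^ Suc i * M ^ n"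
      using weight_pow_le[of 0 i] M_ge_1 by (simp add: mult_right_mono)
    finally show ?thesis .
  qed
  have "summable (\<lambda>i. (1 / 4) ^ Suc i * M ^ n)"
    by (intro summable_mult2) (simp add: summable_geometric)
  then show summable: "summable (\<lambda>i. weight i * shift_mass (block_profile i) n)"
  proof (rule summable_comparison_test')
    show "norm (weight i * shift_mass (block_profile i) n) \<le> (1 / 4) ^ Suc i * M ^ n" for i
      using le[of i] weight_pos[of i] shift_mass_nonneg[OF profile_block_profile, of i n] by simp
  qed
  have summable_cols: "summable (\<lambda>i. \<Sum>m. g i m)" "\<And>i. summable (g i)"
    using summable cols summable_mult[OF summable_block] by (simp_all add: g_def[abs_def])
  show "summable (\<lambda>m. (if m = 0 then 0 else irregular_profile (m + n)) * v m)"
    using suminf_swap_le(1)[OF g_nonneg summable_rows summable_cols(2,1)] by (simp add: rows)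
  show "shift_mass irregular_profile n \<le> (\<Sum>i. weight i * shift_mass (block_profile i) n)"
    using suminf_swap_le(2)[OF g_nonneg summable_rows summable_cols(2,1)]
    by (simp add: rows cols shift_mass_def)
qed

lemma weight_shift_mass_le_irregular:
  "weight j * shift_mass (block_profile j) n \<le> shift_mass irregular_profile n"
proof -
  have summable_block: "summable (\<lambda>m. (if m = 0 then 0 else block_profile j (m + n)) * v m)"
    using profile_block_profile[of j]
    by (intro summable_finite[of "{1..block_support j}"]) (auto simp: profile_def)
  have single: "weight j * block_profile j m \<le> irregular_profile m" for m
    unfolding irregular_profile_def
    using sum_le_suminf[OF summable_weight_block_profile, of "{j}" m] weight_pos block_profile_nonneg
    by (simp add: less_imp_le)
  have "weight j * shift_mass (block_profile j) n
      = (\<Sum>m. weight j * ((if m = 0 then 0 else block_profile j (m + n)) * v m))"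
    unfolding shift_mass_def by (rule suminf_mult[OF summable_block, symmetric])
  also have "\<dots> \<le> shift_mass irregular_profile n"
    unfolding shift_mass_def
  proof (rule suminf_le)
    show "weight j * ((if m = 0 then 0 else block_profile j (m + n)) * v m)
        \<le> (if m = 0 then 0 else irregular_profile (m + n)) * v m" for m
      using single[of "m + n"] v_pos[of m] by (cases "m = 0") (simp_all add: mult_right_mono mult.assoc[symmetric])
  qed (use summable_mult[OF summable_block] shift_mass_irregular_profile_le(1) in auto)
  finally show ?thesis .
qed

lemma upper_dens_irregular_large: "upper_dens {n. c \<le> shift_mass irregular_profile n} = 1"
  unfolding upper_dens_eq_1_iff frequently_sequentially
proof (intro allI impI)
  fix r :: real and N0 :: nat
  assume "r < 1"
  have "\<forall>\<^sub>F i in sequentially. 1 / real (i + 2) < 1 - r \<and> nat \<lceil>c\<rceil> \<le> i"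
    using \<open>r < 1\<close> by (intro eventually_conj eventually_inverse_add_2_less eventually_ge_at_top) simp
  then obtain i where i: "1 / real (i + 2) < 1 - r" "N0 \<le> i" "nat \<lceil>c\<rceil> \<le> i"
    using eventually_frequently[OF sequentially_bot] unfolding frequently_sequentially by blast
  then have "c \<le> real (Suc i)"
    by linarith
  define N where "N = block_length i"
  have "{n\<in>{1..N}. real (Suc i) / weight i \<le> shift_mass (block_profile i) n}
      \<subseteq> {n. c \<le> shift_mass irregular_profile n} \<inter> {1..N}"
  proof (intro subsetI)
    fix n
    assume n: "n \<in> {n\<in>{1..N}. real (Suc i) / weight i \<le> shift_mass (block_profile i) n}"
    then have "real (Suc i) \<le> weight i * shift_mass (block_profile i) n"
      using weight_pos[of i] by (simp add: divide_le_eq mult.commute)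
    with weight_shift_mass_le_irregular[of i n] \<open>c \<le> real (Suc i)\<close> n show "n \<in> {n. c \<le> shift_mass irregular_profile n} \<inter> {1..N}"
      by auto
  qed
  then have "card {n\<in>{1..N}. real (Suc i) / weight i \<le> shift_mass (block_profile i) n}
      \<le> card ({n. c \<le> shift_mass irregular_profile n} \<inter> {1..N})"
    by (intro card_mono) auto
  then have "(1 - 1 / real (i + 2)) * real N \<le> real (card ({n. c \<le> shift_mass irregular_profile n} \<inter> {1..N}))"
    using block_profile_large[of i] unfolding N_def by linarith
  moreover have "r * real N < (1 - 1 / real (i + 2)) * real N"
    using i(1) block_length_ge[of i] by (intro mult_strict_right_mono) (auto simp: N_def)
  moreover have "N0 \<le> N"
    using i(2) block_length_ge[of i] by (simp add: N_def)
  ultimately show "\<exists>N\<ge>N0. r * real N < real (card ({n. c \<le> shift_mass irregular_profile n} \<inter> {1..N}))"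
    by force
qed

lemma weight_shift_mass_le_tail:
  assumes "block_end i \<le> n" "n \<le> horizon (Suc i)"
  shows "weight j * shift_mass (block_profile j) n \<le> (1 / 2) ^ Suc i * (1 / 2) ^ Suc j"
proof (cases "j \<le> i")
  case True
  then have "shift_mass (block_profile j) n = 0"
    using block_support_le_block_end[OF True] assms(1)
    by (intro shift_mass_eq_0[OF profile_block_profile]) simp
  then show ?thesis
    by simp
next
  case False
  have "n \<le> horizon j"
    using assms(2) horizon_mono[of "Suc i" j] False by simp
  have "weight j * shift_mass (block_profile j) n \<le> weight j * M ^ n"
    using shift_mass_le_pow[OF profile_block_profile, of j n] shift_mass_block_profile_0 weight_pos[of j]
    by simp
  also have "\<dots> \<le> (1 / 4) ^ Suc j"
    using weight_pow_le[OF \<open>n \<le> horizon j\<close>] .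
  also have "\<dots> = (1 / 2) ^ Suc j * (1 / 2) ^ Suc j"
    by (simp add: power_mult_distrib[symmetric])
  also have "\<dots> \<le> (1 / 2) ^ Suc i * (1 / 2) ^ Suc j"
    using False by (intro mult_right_mono power_decreasing) auto
  finally show ?thesis .
qed

lemma shift_mass_irregular_tail:
  assumes "block_end i \<le> n" "n \<le> horizon (Suc i)"
  shows "shift_mass irregular_profile n \<le> (1 / 2) ^ Suc i"
proof -
  have "shift_mass irregular_profile n \<le> (\<Sum>j. weight j * shift_mass (block_profile j) n)"
    by (rule shift_mass_irregular_profile_le(3))
  also have "\<dots> \<le> (\<Sum>j. (1 / 2) ^ Suc i * (1 / 2) ^ Suc j)"
    using weight_shift_mass_le_tail[OF assms] shift_mass_irregular_profile_le(2)
      summable_mult[OF sums_summable[OF power_half_series]]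
    by (rule suminf_le)
  also have "\<dots> = (1 / 2) ^ Suc i * (\<Sum>j. (1 / 2) ^ Suc j)"
    by (rule suminf_mult[OF sums_summable[OF power_half_series]])
  also have "\<dots> = (1 / 2) ^ Suc i"
    using sums_unique[OF power_half_series] by simp
  finally show ?thesis .
qed

lemma upper_dens_irregular_small:
  assumes "0 < \<delta>"
  shows "upper_dens {n. shift_mass irregular_profile n < \<delta>} = 1"
  unfolding upper_dens_eq_1_iff frequently_sequentially
proof (intro allI impI)
  fix r :: real and N0 :: nat
  assume "r < 1"
  let ?A = "{n. shift_mass irregular_profile n < \<delta>}"
  have "\<forall>\<^sub>F i in sequentially. 1 / real (i + 2) < 1 - r \<and> (1 / 2) ^ Suc i < \<delta>"
    using \<open>r < 1\<close> assms by (intro eventually_conj eventually_inverse_add_2_less eventually_half_power_less) simp_all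
  then obtain i where i: "1 / real (i + 2) < 1 - r" "(1 / 2) ^ Suc i < \<delta>" "N0 \<le> i"
    using eventually_frequently[OF sequentially_bot] unfolding frequently_sequentially by blast
  define N where "N = horizon (Suc i)"
  have N: "N = (i + 2) * (block_end i + 1)"
    by (simp add: N_def horizon_Suc_eq)
  have "{Suc (block_end i)..N} \<subseteq> ?A \<inter> {1..N}"
  proof (intro subsetI)
    fix n
    assume n: "n \<in> {Suc (block_end i)..N}"
    then have "shift_mass irregular_profile n \<le> (1 / 2) ^ Suc i"
      by (intro shift_mass_irregular_tail) (auto simp: N_def)
    with i(2) n show "n \<in> ?A \<inter> {1..N}"
      by auto
  qed
  then have "real N - real (block_end i) \<le> real (card (?A \<inter> {1..N}))"
    using card_mono[of "?A \<inter> {1..N}" "{Suc (block_end i)..N}"] by force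
  moreover have "real (block_end i) * real (i + 2) \<le> real N"
    unfolding N by (simp add: algebra_simps)
  then have "real (block_end i) \<le> 1 / real (i + 2) * real N"
    by (simp add: field_simps)
  moreover have "0 < N"
    by (simp add: N)
  then have "1 / real (i + 2) * real N < (1 - r) * real N"
    using i(1) by (intro mult_strict_right_mono) auto
  moreover have "N0 \<le> N"
    using i(3) by (simp add: N)
  ultimately show "\<exists>N\<ge>N0. r * real N < real (card (?A \<inter> {1..N}))"
    by (intro exI[of _ N]) (auto simp: algebra_simps)
qed

lemma distr_irregular_irregular_profile: "distr_irregular (profile_vec irregular_profile)"
proof -
  have "normp ((bshift ^^ n) (profile_vec irregular_profile)) = shift_mass irregular_profile n" for n
    using irregular_profile_nonneg by (rule normp_bshift_pow_profile_vec)
  moreover have "profile_vec irregular_profile \<in> lpv_space p v"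
    using shift_mass_irregular_profile_le(1)[of 0] irregular_profile_nonneg
    unfolding add_0_right by (subst profile_vec_in_lpv_space_iff) auto
  ultimately show ?thesis
    unfolding distr_irregular_def using upper_dens_irregular_large upper_dens_irregular_small by simp
qed

end

context weighted_backward_shift
begin

lemma expanding_profiles_imp_distr_irregular:
  assumes expanding_profiles
  shows "\<exists>y. distr_irregular y"
proof -
  interpret expanding_weighted_shift p v M
    by unfold_locales (fact assms)
  show ?thesis
    using distr_irregular_irregular_profile by blast
qed

end

section \<open>Dense distributional chaos from an irregular vector\<close>

definition rat_seq_len :: "nat \<Rightarrow> nat" where
  "rat_seq_len r = length (from_nat r :: (rat \<times> rat) list)"

text \<open>Every finitely supported sequence with Gaussian rational entries is \<open>rat_seq r\<close> for some
  code \<open>r\<close> of its list of entries.\<close>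
definition rat_seq :: "nat \<Rightarrow> nat \<Rightarrow> complex" where
  "rat_seq r m = (if m = 0 \<or> rat_seq_len r < m then 0
     else case (from_nat r :: (rat \<times> rat) list) ! (m - 1) of (a, b) \<Rightarrow> Complex (of_rat a) (of_rat b))"

lemma rat_seq_eq_0: "m = 0 \<or> rat_seq_len r < m \<Longrightarrow> rat_seq r m = 0"
  by (simp add: rat_seq_def)

lemma rat_approx_complex:
  fixes z :: complex
  assumes "0 < \<rho>"
  shows "\<exists>a b. norm (z - Complex (of_rat a) (of_rat b)) < \<rho>"
proof -
  obtain x where x: "x \<in> \<rat>" "Re z - \<rho> / 2 < x" "x < Re z + \<rho> / 2"
    using Rats_dense_in_real[of "Re z - \<rho> / 2" "Re z + \<rho> / 2"] assms by auto
  obtain y where y: "y \<in> \<rat>" "Im z - \<rho> / 2 < y" "y < Im z + \<rho> / 2"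
    using Rats_dense_in_real[of "Im z - \<rho> / 2" "Im z + \<rho> / 2"] assms by auto
  have "norm (z - Complex x y) \<le> \<bar>Re (z - Complex x y)\<bar> + \<bar>Im (z - Complex x y)\<bar>"
    by (rule cmod_le)
  also have "\<dots> < \<rho>"
    using x y by (simp add: abs_less_iff)
  finally have "norm (z - Complex x y) < \<rho>" .
  moreover obtain a b where "x = of_rat a" "y = of_rat b"
    using x(1) y(1) Rats_cases by metis
  ultimately show ?thesis
    by blast
qed

lemma rat_seq_approx:
  assumes "\<And>m. 1 \<le> m \<Longrightarrow> m \<le> L \<Longrightarrow> 0 < \<rho> m"
  shows "\<exists>r. rat_seq_len r = L \<and> (\<forall>m\<in>{1..L}. norm (z m - rat_seq r m) < \<rho> m)"
proof -
  have "\<exists>ab. norm (z m - Complex (of_rat (fst ab)) (of_rat (snd ab))) < \<rho> m" if m: "m \<in> {1..L}" for m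
  proof -
    obtain a b where "norm (z m - Complex (of_rat a) (of_rat b)) < \<rho> m"
      using rat_approx_complex[of "\<rho> m" "z m"] assms[of m] m by auto
    then show ?thesis
      by (intro exI[of _ "(a, b)"]) simp
  qed
  then have ex: "\<forall>m\<in>{1..L}. \<exists>ab. norm (z m - Complex (of_rat (fst ab)) (of_rat (snd ab))) < \<rho> m"
    by blast
  obtain q where q: "\<forall>m\<in>{1..L}. norm (z m - Complex (of_rat (fst (q m))) (of_rat (snd (q m)))) < \<rho> m"
    using bchoice[OF ex] by blast
  define r where "r = to_nat (map q [1..<L + 1])"
  have list: "from_nat r = map q [1..<L + 1]"
    by (simp add: r_def)
  then have len: "rat_seq_len r = L"
    by (simp add: rat_seq_len_def)
  have "rat_seq r m = Complex (of_rat (fst (q m))) (of_rat (snd (q m)))" if "m \<in> {1..L}" for m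
  proof -
    have "m - 1 < L" "1 \<le> m"
      using that by auto
    then have "(from_nat r :: (rat \<times> rat) list) ! (m - 1) = q m"
      by (simp add: list del: upt_Suc)
    with that show ?thesis
      by (simp add: rat_seq_def len case_prod_unfold)
  qed
  with q len show ?thesis
    by auto
qed

definition perturbed :: "(nat \<Rightarrow> complex) \<Rightarrow> nat \<Rightarrow> real \<Rightarrow> nat \<Rightarrow> complex" where
  "perturbed y r l = (\<lambda>m. rat_seq r m + complex_of_real l * y m)"

text \<open>The dyadic interval containing \<open>l\<close> determines \<open>q\<close> and hence the finitely supported part;
  since every \<open>r\<close> is \<open>fst (prod_decode q)\<close> for arbitrarily large \<open>q\<close>, the set is dense.\<close>
definition chaos_set :: "(nat \<Rightarrow> complex) \<Rightarrow> (nat \<Rightarrow> complex) set" where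
  "chaos_set y = {perturbed y (fst (prod_decode q)) l | q l. (1 / 2) ^ Suc q < l \<and> l < (1 / 2) ^ q}"

context weighted_backward_shift
begin

lemma rat_seq_in_lpv_space: "rat_seq r \<in> lpv_space p v"
proof -
  have "summable (\<lambda>m. norm (rat_seq r m) powr p * v m)"
    by (rule summable_finite[of "{1..rat_seq_len r}"]) (auto simp: rat_seq_eq_0)
  then show ?thesis
    by (simp add: mem_lpv_space_iff rat_seq_eq_0)
qed

lemma rat_seq_dense:
  assumes x: "x \<in> lpv_space p v" and "0 < e"
  shows "\<exists>r. normp (x - rat_seq r) < e"
proof -
  have x0: "x 0 = 0" and sx: "summable (\<lambda>m. norm (x m) powr p * v m)"
    using x by (auto simp: mem_lpv_space_iff)
  have "0 < e / 2"
    using \<open>0 < e\<close> by simp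
  then obtain L where "\<forall>n\<ge>L. norm (\<Sum>m. norm (x (m + n)) powr p * v (m + n)) < e / 2"
    using suminf_exist_split[OF _ sx] by blast
  then have tail: "norm (\<Sum>m. norm (x (m + (L + 1))) powr p * v (m + (L + 1))) < e / 2"
    using le_add1 by blast
  define \<rho> where "\<rho> m = (e / (2 * (L + 1) * v m)) powr (1 / p)" for m
  obtain r where r: "rat_seq_len r = L" "\<And>m. m \<in> {1..L} \<Longrightarrow> norm (x m - rat_seq r m) < \<rho> m"
    using rat_seq_approx[of L \<rho> x] v_pos \<open>0 < e\<close> by (force simp: \<rho>_def)
  define g where "g m = norm ((x - rat_seq r) m) powr p * v m" for m
  have "summable g"
    using lpv_space_diff(1)[OF x rat_seq_in_lpv_space] by (simp add: g_def[abs_def] mem_lpv_space_iff)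
  then have "normp (x - rat_seq r) = (\<Sum>m. g (m + (L + 1))) + (\<Sum>m<L + 1. g m)"
    unfolding normp_def g_def[symmetric] by (rule suminf_split_initial_segment)
  also have "(\<Sum>m. g (m + (L + 1))) < e / 2"
    using tail r(1) by (simp add: g_def rat_seq_eq_0)
  also have "(\<Sum>m<L + 1. g m) \<le> (\<Sum>m<L + 1. e / (2 * (L + 1)))"
  proof (rule sum_mono)
    fix m
    assume "m \<in> {..<L + 1}"
    show "g m \<le> e / (2 * (L + 1))"
    proof (cases "m = 0")
      case False
      then have "m \<in> {1..L}" "0 < v m"
        using \<open>m \<in> {..<L + 1}\<close> v_pos by auto
      then have "norm ((x - rat_seq r) m) powr p \<le> \<rho> m powr p"
        using r(2) p_pos by (intro powr_mono2) (auto simp: less_imp_le)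
      also have "\<rho> m powr p = e / (2 * (L + 1) * v m)"
        using \<open>0 < e\<close> \<open>0 < v m\<close> p_pos by (simp add: \<rho>_def powr_powr)
      finally have "g m \<le> e / (2 * (L + 1) * v m) * v m"
        unfolding g_def using \<open>0 < v m\<close> by (intro mult_right_mono) auto
      with \<open>0 < v m\<close> show ?thesis
        by simp
    qed (simp add: g_def x0 rat_seq_eq_0 \<open>0 < e\<close> less_imp_le)
  qed
  also have "(\<Sum>m<L + 1. e / (2 * (L + 1))) \<le> e / 2"
    using \<open>0 < e\<close> by (simp add: field_simps)
  finally show ?thesis
    by auto
qed

lemma perturbed_in_lpv_space: "y \<in> lpv_space p v \<Longrightarrow> perturbed y r l \<in> lpv_space p v"
  unfolding perturbed_def by (intro lpv_space_add rat_seq_in_lpv_space lpv_space_scale(1))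

lemma normp_bshift_pow_perturbed_diff:
  assumes y: "y \<in> lpv_space p v" and "rat_seq_len r \<le> j" "rat_seq_len r' \<le> j"
  shows "normp ((bshift ^^ j) (perturbed y r l) - (bshift ^^ j) (perturbed y r' l'))
    = \<bar>l - l'\<bar> powr p * normp ((bshift ^^ j) y)"
proof -
  have "y 0 = 0"
    using y by (simp add: mem_lpv_space_iff)
  then have "(bshift ^^ j) (perturbed y r l) - (bshift ^^ j) (perturbed y r' l')
      = (\<lambda>m. complex_of_real (l - l') * (bshift ^^ j) y m)"
    using assms(2,3)
    by (auto simp: bshift_pow_diff[symmetric] bshift_pow perturbed_def rat_seq_eq_0 algebra_simps fun_eq_iff)
  moreover have "norm (complex_of_real l - complex_of_real l') = \<bar>l - l'\<bar>"
    by (metis norm_of_real of_real_diff)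
  ultimately show ?thesis
    using lpv_space_scale(2)[OF bshift_pow_in_lpv_space(1)[OF y]] by simp
qed

lemma uncountable_chaos_set:
  assumes "y m \<noteq> 0"
  shows "uncountable (chaos_set y)"
proof
  assume "countable (chaos_set y)"
  define r where "r = fst (prod_decode 0)"
  have "perturbed y r ` {1 / 2<..<1} \<subseteq> chaos_set y"
    unfolding chaos_set_def r_def by force
  moreover have "inj_on (perturbed y r) {1 / 2<..<1}"
    using assms by (intro inj_onI) (auto simp: perturbed_def fun_eq_iff dest!: spec[of _ m])
  ultimately have "countable {1 / 2<..<1 :: real}"
    using \<open>countable (chaos_set y)\<close> countable_image_inj_on countable_subset by blast
  then show False
    using uncountable_open_interval[of "1 / 2" "1 :: real"] by simp
qed

lemma perturbed_pair_scrambled: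
  assumes "distr_irregular y" "l \<noteq> l'" "0 < \<delta>"
  shows "lower_dens {j. lpv_dist p v ((bshift ^^ j) (perturbed y r l)) ((bshift ^^ j) (perturbed y r' l')) < 1} = 0"
    and "upper_dens {j. lpv_dist p v ((bshift ^^ j) (perturbed y r l)) ((bshift ^^ j) (perturbed y r' l')) < \<delta>} = 1"
proof -
  have y: "y \<in> lpv_space p v"
    and large: "\<And>c. upper_dens {n. c \<le> normp ((bshift ^^ n) y)} = 1"
    and small: "\<And>\<delta>. 0 < \<delta> \<Longrightarrow> upper_dens {n. normp ((bshift ^^ n) y) < \<delta>} = 1"
    using assms(1) by (auto simp: distr_irregular_def)
  define c where "c = \<bar>l - l'\<bar> powr p"
  have "0 < c"
    using assms(2) by (simp add: c_def)
  define L where "L = max (rat_seq_len r) (rat_seq_len r')"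
  have key: "lpv_dist p v ((bshift ^^ j) (perturbed y r l)) ((bshift ^^ j) (perturbed y r' l')) < t
      \<longleftrightarrow> c * normp ((bshift ^^ j) y) < t powr p" if "L \<le> j" "0 < t" for j t
    using lpv_dist_less_iff[OF bshift_pow_in_lpv_space(1)[OF perturbed_in_lpv_space[OF y]]
        bshift_pow_in_lpv_space(1)[OF perturbed_in_lpv_space[OF y]] \<open>0 < t\<close>]
      normp_bshift_pow_perturbed_diff[OF y, of r j r' l l'] that(1)
    by (simp add: c_def L_def)
  show "lower_dens {j. lpv_dist p v ((bshift ^^ j) (perturbed y r l)) ((bshift ^^ j) (perturbed y r' l')) < 1} = 0"
    unfolding lower_dens_eq_0_iff_upper_dens_Compl
  proof (rule upper_dens_eq_1_mono[OF large[of "1 / c"], where L = L])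
    fix j
    assume "L \<le> j" "j \<in> {n. 1 / c \<le> normp ((bshift ^^ n) y)}"
    then show "j \<in> - {j. lpv_dist p v ((bshift ^^ j) (perturbed y r l)) ((bshift ^^ j) (perturbed y r' l')) < 1}"
      using key[of j 1] \<open>0 < c\<close> by (simp add: field_simps)
  qed
  show "upper_dens {j. lpv_dist p v ((bshift ^^ j) (perturbed y r l)) ((bshift ^^ j) (perturbed y r' l')) < \<delta>} = 1"
  proof (rule upper_dens_eq_1_mono[OF small[of "\<delta> powr p / c"], where L = L])
    show "0 < \<delta> powr p / c"
      using \<open>0 < c\<close> \<open>0 < \<delta>\<close> by simp
    fix j
    assume "L \<le> j" "j \<in> {n. normp ((bshift ^^ n) y) < \<delta> powr p / c}"
    then show "j \<in> {j. lpv_dist p v ((bshift ^^ j) (perturbed y r l)) ((bshift ^^ j) (perturbed y r' l')) < \<delta>}"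
      using key[of j \<delta>] \<open>0 < c\<close> \<open>0 < \<delta>\<close> by (simp add: field_simps)
  qed
qed

lemma normp_scale_small:
  assumes "y \<in> lpv_space p v" "0 < b"
  obtains \<rho> where "0 < \<rho>" "\<And>l. 0 \<le> l \<Longrightarrow> l < \<rho> \<Longrightarrow> normp (\<lambda>m. complex_of_real l * y m) < b"
proof
  define K where "K = normp y + 1"
  have "0 < K"
    using normp_nonneg[OF assms(1)] by (simp add: K_def)
  show "0 < (b / K) powr (1 / p)"
    using \<open>0 < K\<close> assms(2) by simp
  fix l :: real
  assume "0 \<le> l" "l < (b / K) powr (1 / p)"
  then have "l powr p < ((b / K) powr (1 / p)) powr p"
    using p_pos by (intro powr_less_mono2) auto
  also have "\<dots> = b / K"
    using \<open>0 < K\<close> assms(2) p_pos by (simp add: powr_powr)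
  finally have "l powr p * normp y \<le> b / K * normp y"
    using normp_nonneg[OF assms(1)] by (intro mult_right_mono) auto
  also have "\<dots> < b"
    using \<open>0 < K\<close> assms(2) by (simp add: K_def field_simps)
  finally show "normp (\<lambda>m. complex_of_real l * y m) < b"
    using lpv_space_scale(2)[OF assms(1)] \<open>0 \<le> l\<close> by simp
qed

lemma chaos_set_dense:
  assumes y: "y \<in> lpv_space p v" and x: "x \<in> lpv_space p v" and "0 < e"
  shows "\<exists>z\<in>chaos_set y. lpv_dist p v x z < e"
proof -
  define b where "b = e powr p / (2 * 2 powr p)"
  have "0 < b"
    using \<open>0 < e\<close> by (simp add: b_def)
  obtain r where r: "normp (x - rat_seq r) < b"
    using rat_seq_dense[OF x \<open>0 < b\<close>] by blast
  obtain \<rho> where "0 < \<rho>" and \<rho>: "\<And>l. 0 \<le> l \<Longrightarrow> l < \<rho> \<Longrightarrow> normp (\<lambda>m. complex_of_real l * y m) < b"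
    using normp_scale_small[OF y \<open>0 < b\<close>] by blast
  obtain k where k: "(1 / 2) ^ k < \<rho>"
    using real_arch_pow_inv[OF \<open>0 < \<rho>\<close>, of "1 / 2"] by auto
  define q where "q = prod_encode (r, k)"
  define l :: real where "l = 3 / 4 * (1 / 2) ^ q"
  have l: "(1 / 2) ^ Suc q < l" "l < (1 / 2) ^ q"
    by (auto simp: l_def)
  have "(1 / 2 :: real) ^ q \<le> (1 / 2) ^ k"
    unfolding q_def by (intro power_decreasing le_prod_encode_2) auto
  then have "l < \<rho>"
    using l(2) k by linarith
  then have small: "normp (\<lambda>m. complex_of_real l * y m) < b"
    by (intro \<rho>) (auto simp: l_def)
  have mem: "perturbed y r l \<in> chaos_set y"
    unfolding chaos_set_def using l by (intro CollectI exI[of _ q] exI[of _ l]) (simp add: q_def)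
  have "x - perturbed y r l = (x - rat_seq r) - (\<lambda>m. complex_of_real l * y m)"
    by (simp add: perturbed_def fun_eq_iff)
  then have "normp (x - perturbed y r l) \<le> 2 powr p * (normp (x - rat_seq r) + normp (\<lambda>m. complex_of_real l * y m))"
    using lpv_space_diff(2)[OF lpv_space_diff(1)[OF x rat_seq_in_lpv_space] lpv_space_scale(1)[OF y]] by simp
  also have "\<dots> < 2 powr p * (b + b)"
    using r small by (intro mult_strict_left_mono) auto
  also have "\<dots> = e powr p"
    by (simp add: b_def)
  finally have "lpv_dist p v x (perturbed y r l) < e"
    using lpv_dist_less_iff[OF x perturbed_in_lpv_space[OF y] \<open>0 < e\<close>] by simp
  with mem show ?thesis
    by blast
qed

lemma distr_irregular_imp_dense_dc:
  assumes irr: "distr_irregular y"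
  shows "dense_distr_chaotic_B p v"
proof -
  have y: "y \<in> lpv_space p v"
    using irr by (simp add: distr_irregular_def)
  obtain n where "1 \<le> normp ((bshift ^^ n) y)"
    using upper_dens_eq_1_imp_nonempty irr unfolding distr_irregular_def by blast
  moreover have "normp ((bshift ^^ n) y) = 0" if "\<forall>m. y m = 0"
  proof -
    have "(bshift ^^ n) y = (\<lambda>_. 0)"
      using that by (simp add: bshift_pow fun_eq_iff)
    then show ?thesis
      by (simp add: normp_def)
  qed
  ultimately obtain m where "y m \<noteq> 0"
    by force
  have scrambled: "lower_dens {j. lpv_dist p v ((bshift ^^ j) x) ((bshift ^^ j) x') < 1} = 0 \<and>
      upper_dens {j. lpv_dist p v ((bshift ^^ j) x) ((bshift ^^ j) x') < \<delta>} = 1"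
    if pair: "x \<in> chaos_set y" "x' \<in> chaos_set y" "x \<noteq> x'" "0 < \<delta>" for x x' \<delta>
  proof -
    obtain q l q' l' where x: "x = perturbed y (fst (prod_decode q)) l" "(1 / 2) ^ Suc q < l" "l < (1 / 2) ^ q"
      and x': "x' = perturbed y (fst (prod_decode q')) l'" "(1 / 2) ^ Suc q' < l'" "l' < (1 / 2) ^ q'"
      using pair(1,2) unfolding chaos_set_def by blast
    have "l \<noteq> l'"
      using dyadic_index_unique[of q l q'] x x' pair(3) by auto
    then show ?thesis
      unfolding x(1) x'(1) using perturbed_pair_scrambled[OF irr _ pair(4)] by blast
  qed
  show ?thesis
    unfolding dense_distr_chaotic_B_def dc_set_def
  proof (intro exI[of _ "chaos_set y"] conjI)
    show "chaos_set y \<subseteq> lpv_space p v"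
      using perturbed_in_lpv_space[OF y] by (auto simp: chaos_set_def)
    show "uncountable (chaos_set y)"
      using uncountable_chaos_set[of y m, OF \<open>y m \<noteq> 0\<close>] .
    show "\<exists>\<epsilon>>0. \<forall>\<delta>>0. \<forall>x\<in>chaos_set y. \<forall>x'\<in>chaos_set y. x \<noteq> x' \<longrightarrow>
        lower_dens {j. lpv_dist p v ((bshift ^^ j) x) ((bshift ^^ j) x') < \<epsilon>} = 0 \<and>
        upper_dens {j. lpv_dist p v ((bshift ^^ j) x) ((bshift ^^ j) x') < \<delta>} = 1"
      using scrambled by (intro exI[of _ 1]) auto
    show "\<forall>x\<in>lpv_space p v. \<forall>e>0. \<exists>z\<in>chaos_set y. lpv_dist p v x z < e"
      using chaos_set_dense[OF y] by blast
  qed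
qed

end

section \<open>From distributional chaos to the criterion\<close>

context weighted_backward_shift
begin

lemma truncated_profile:
  assumes w: "w \<in> lpv_space p v" and "finite G" and G: "\<And>n. n \<in> G \<Longrightarrow> c < normp ((bshift ^^ n) w)"
  obtains L where "\<And>n. n \<in> G \<Longrightarrow> c < shift_mass (\<lambda>j. if j \<in> {1..L} then norm (w j) powr p else 0) n"
    and "shift_mass (\<lambda>j. if j \<in> {1..L} then norm (w j) powr p else 0) 0 \<le> normp w"
proof -
  have w0: "w 0 = 0"
    using w by (simp add: mem_lpv_space_iff)
  define h where "h n m = norm ((bshift ^^ n) w m) powr p * v m" for n m
  have h: "summable (h n)" "normp ((bshift ^^ n) w) = (\<Sum>m. h n m)" "\<And>m. 0 \<le> h n m" for n
    using bshift_pow_in_lpv_space(1)[OF w, of n] lpv_term_nonneg[of "(bshift ^^ n) w"]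
    by (auto simp: h_def[abs_def] normp_def mem_lpv_space_iff)
  have "\<forall>\<^sub>F T in sequentially. \<forall>n\<in>G. c < (\<Sum>m<T. h n m)"
    using \<open>finite G\<close> G h(2) summable_LIMSEQ[OF h(1)]
    by (intro eventually_ball_finite ballI order_tendstoD(1)) auto
  then obtain T where T: "\<And>n. n \<in> G \<Longrightarrow> c < (\<Sum>m<T. h n m)"
    unfolding eventually_sequentially by blast
  define L where "L = T + Max (insert 0 G)"
  let ?a = "\<lambda>j. if j \<in> {1..L} then norm (w j) powr p else 0"
  have a: "profile ?a L"
    by (auto simp: profile_def)
  show thesis
  proof
    fix n
    assume "n \<in> G"
    then have "n \<le> Max (insert 0 G)"
      using \<open>finite G\<close> by simp
    have "(\<Sum>m<T. h n m) = (\<Sum>m\<in>{1..<T}. ?a (m + n) * v m)"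
    proof -
      have "(\<Sum>m<T. h n m) = (\<Sum>m\<in>{1..<T}. h n m)"
        by (rule sum.mono_neutral_right) (auto simp: h_def w0 bshift_pow)
      also have "\<dots> = (\<Sum>m\<in>{1..<T}. ?a (m + n) * v m)"
        using \<open>n \<le> Max (insert 0 G)\<close> by (intro sum.cong) (auto simp: h_def w0 bshift_pow L_def)
      finally show ?thesis .
    qed
    also have "\<dots> \<le> (\<Sum>m\<in>{1..L}. ?a (m + n) * v m)"
      using v_pos by (intro sum_mono2) (auto simp: L_def less_imp_le)
    finally show "c < shift_mass ?a n"
      using T[OF \<open>n \<in> G\<close>] shift_mass_finite[OF a] by simp
  next
    have "shift_mass ?a 0 = (\<Sum>m\<in>{1..L}. norm (w m) powr p * v m)"
      unfolding shift_mass_finite[OF a] by (intro sum.cong) auto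
    also have "\<dots> \<le> normp w"
      using w lpv_term_nonneg[of w] w0 unfolding normp_def
      by (intro sum_le_suminf) (auto simp: mem_lpv_space_iff)
    finally show "shift_mass ?a 0 \<le> normp w" .
  qed
qed

lemma dc_block_of_truncation:
  assumes w: "w \<in> lpv_space p v" and "0 < \<epsilon>"
    and G: "G \<subseteq> {1..N}" "real N \<le> 2 * real (card G)" "G \<noteq> {}"
    and large: "\<And>n. n \<in> G \<Longrightarrow> \<epsilon> \<le> normp ((bshift ^^ n) w)"
    and small: "normp w < \<epsilon> / (2 * (real k + 1))"
  shows "\<exists>S C. dc_block v k (N, S, C)"
proof -
  have "finite G"
    using G(1) by (rule finite_subset) simp
  moreover have "\<epsilon> / 2 < normp ((bshift ^^ n) w)" if "n \<in> G" for n
    using large[OF that] \<open>0 < \<epsilon>\<close> by simp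
  ultimately obtain L
    where L: "\<And>n. n \<in> G \<Longrightarrow> \<epsilon> / 2 < shift_mass (\<lambda>j. if j \<in> {1..L} then norm (w j) powr p else 0) n"
      and L0: "shift_mass (\<lambda>j. if j \<in> {1..L} then norm (w j) powr p else 0) 0 \<le> normp w"
    using truncated_profile[OF w] by blast
  define S where "S = {j\<in>{1..L}. w j \<noteq> 0}"
  define C where "C j = complex_of_real (norm (w j) powr p)" for j
  have a: "coeff_profile S C = (\<lambda>j. if j \<in> {1..L} then norm (w j) powr p else 0)"
    unfolding S_def C_def by (rule coeff_profile_truncation)
  have S: "finite S" "S \<subseteq> {1..}" "\<forall>j\<in>S. C j \<noteq> 0"
    by (auto simp: S_def C_def)
  obtain n where "\<epsilon> / 2 < shift_mass (coeff_profile S C) n"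
    using L G(3) by (auto simp: a)
  moreover have "coeff_profile {} C = (\<lambda>_. 0)"
    by (simp add: coeff_profile_def fun_eq_iff)
  moreover have "shift_mass (\<lambda>_. 0) n = 0"
    by (simp add: shift_mass_def)
  ultimately have "S \<noteq> {}"
    using \<open>0 < \<epsilon>\<close> by auto
  have pos: "0 < shift_mass (coeff_profile S C) 0"
    using S \<open>S \<noteq> {}\<close> by (intro shift_mass_coeff_profile_pos) auto
  have "G \<subseteq> {n\<in>{1..N}. real k \<le> shift_ratio v S C n}"
  proof
    fix n
    assume "n \<in> G"
    have "shift_mass (coeff_profile S C) 0 \<le> \<epsilon> / (2 * (real k + 1))"
      using L0 small unfolding a by linarith
    then have "real k * shift_mass (coeff_profile S C) 0 \<le> real k * (\<epsilon> / (2 * (real k + 1)))"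
      by (rule mult_left_mono) simp
    also have "\<dots> \<le> \<epsilon> / 2"
      using \<open>0 < \<epsilon>\<close> by (simp add: field_simps)
    also have "\<dots> < shift_mass (coeff_profile S C) n"
      using L[OF \<open>n \<in> G\<close>] by (simp add: a)
    finally show "n \<in> {n\<in>{1..N}. real k \<le> shift_ratio v S C n}"
      using \<open>n \<in> G\<close> G(1) pos by (auto simp: shift_ratio_eq[OF S(1,2)] le_divide_eq)
  qed
  then have "card G \<le> card {n\<in>{1..N}. real k \<le> shift_ratio v S C n}"
    by (intro card_mono) auto
  then show ?thesis
    using G(2) S \<open>S \<noteq> {}\<close> unfolding dc_block_def by (intro exI[of _ S] exI[of _ C]) auto
qed

text \<open>Start at a time \<open>m\<close> where \<open>B\<^sup>m z\<close> is tiny and look at a window after \<open>m\<close> in which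
  \<open>B\<^sup>n z\<close> is mostly not small; a truncation of \<open>B\<^sup>m z\<close> then has a large shift ratio at
  these times.\<close>
lemma exists_dc_block:
  assumes z: "z \<in> lpv_space p v" and "0 < \<epsilon>"
    and sparse: "lower_dens {j. normp ((bshift ^^ j) z) < \<epsilon>} = 0"
    and small: "\<And>\<theta>. 0 < \<theta> \<Longrightarrow> upper_dens {j. normp ((bshift ^^ j) z) < \<theta>} = 1"
  shows "\<exists>N S C. b < N \<and> dc_block v k (N, S, C)"
proof -
  have "0 < \<epsilon> / (2 * (real k + 1))"
    using \<open>0 < \<epsilon>\<close> by simp
  then obtain m where m: "normp ((bshift ^^ m) z) < \<epsilon> / (2 * (real k + 1))"
    using upper_dens_eq_1_imp_nonempty[OF small] by blast
  obtain N where "b < N"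
    and N: "real N \<le> 2 * real (card {n\<in>{1..N}. m + n \<notin> {j. normp ((bshift ^^ j) z) < \<epsilon>}})"
    using lower_dens_eq_0_window[OF sparse] by blast
  define w where "w = (bshift ^^ m) z"
  define G where "G = {n\<in>{1..N}. \<epsilon> \<le> normp ((bshift ^^ n) w)}"
  have "(bshift ^^ n) w = (bshift ^^ (m + n)) z" for n
    unfolding w_def by (simp only: add.commute[of m n] funpow_add comp_def)
  then have N_le: "real N \<le> 2 * real (card G)"
    using N by (simp add: G_def not_less)
  then have "G \<noteq> {}"
    using \<open>b < N\<close> by auto
  have "w \<in> lpv_space p v"
    unfolding w_def using z by (rule bshift_pow_in_lpv_space(1))
  moreover have "G \<subseteq> {1..N}" "\<And>n. n \<in> G \<Longrightarrow> \<epsilon> \<le> normp ((bshift ^^ n) w)"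
    by (auto simp: G_def)
  ultimately have "\<exists>S C. dc_block v k (N, S, C)"
    using \<open>0 < \<epsilon>\<close> N_le \<open>G \<noteq> {}\<close> m unfolding w_def by (intro dc_block_of_truncation)
  with \<open>b < N\<close> show ?thesis
    by blast
qed

lemma distr_chaotic_imp_scrambled_difference:
  assumes "distr_chaotic_B p v"
  obtains z \<epsilon> where "z \<in> lpv_space p v" "0 < \<epsilon>" "lower_dens {j. normp ((bshift ^^ j) z) < \<epsilon>} = 0"
    "\<And>\<theta>. 0 < \<theta> \<Longrightarrow> upper_dens {j. normp ((bshift ^^ j) z) < \<theta>} = 1"
proof -
  obtain \<Gamma> where dc: "dc_set bshift (lpv_space p v) (lpv_dist p v) \<Gamma>"
    using assms unfolding distr_chaotic_B_def by blast
  then have \<Gamma>: "\<Gamma> \<subseteq> lpv_space p v" "uncountable \<Gamma>"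
    by (simp_all add: dc_set_def)
  from dc obtain \<epsilon> where "0 < \<epsilon>"
    and pairs: "\<forall>\<delta>>0. \<forall>x\<in>\<Gamma>. \<forall>y\<in>\<Gamma>. x \<noteq> y \<longrightarrow>
      lower_dens {j. lpv_dist p v ((bshift ^^ j) x) ((bshift ^^ j) y) < \<epsilon>} = 0 \<and>
      upper_dens {j. lpv_dist p v ((bshift ^^ j) x) ((bshift ^^ j) y) < \<delta>} = 1"
    unfolding dc_set_def by (elim conjE exE) (rule that)
  have "\<Gamma> \<noteq> {}"
    using \<Gamma>(2) by auto
  then obtain x where "x \<in> \<Gamma>"
    by blast
  moreover have "\<not> \<Gamma> \<subseteq> {x}"
    using \<Gamma>(2) countable_subset[of \<Gamma> "{x}"] by auto
  ultimately obtain y where xy: "x \<in> \<Gamma>" "y \<in> \<Gamma>" "x \<noteq> y"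
    by blast
  then have x: "x \<in> lpv_space p v" and y: "y \<in> lpv_space p v"
    using \<Gamma>(1) by auto
  have dist_iff: "{j. lpv_dist p v ((bshift ^^ j) x) ((bshift ^^ j) y) < t}
      = {j. normp ((bshift ^^ j) (x - y)) < t powr p}" if "0 < t" for t
    using lpv_dist_less_iff[OF bshift_pow_in_lpv_space(1)[OF x] bshift_pow_in_lpv_space(1)[OF y] that]
    by (simp add: bshift_pow_diff)
  show thesis
  proof
    show "x - y \<in> lpv_space p v" "0 < \<epsilon> powr p"
      using x y \<open>0 < \<epsilon>\<close> by (simp_all add: lpv_space_diff(1))
    show "lower_dens {j. normp ((bshift ^^ j) (x - y)) < \<epsilon> powr p} = 0"
      using pairs[rule_format, OF zero_less_one xy] dist_iff[OF \<open>0 < \<epsilon>\<close>] by simp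
    fix \<theta> :: real
    assume "0 < \<theta>"
    define \<delta> where "\<delta> = \<theta> powr (1 / p)"
    have "0 < \<delta>" "\<delta> powr p = \<theta>"
      using \<open>0 < \<theta>\<close> p_pos by (auto simp: \<delta>_def powr_powr)
    then show "upper_dens {j. normp ((bshift ^^ j) (x - y)) < \<theta>} = 1"
      using pairs[rule_format, OF \<open>0 < \<delta>\<close> xy] dist_iff[OF \<open>0 < \<delta>\<close>] by simp
  qed
qed

lemma distr_chaotic_imp_dc_criterion:
  assumes "distr_chaotic_B p v"
  shows "dc_criterion v"
proof -
  obtain z \<epsilon> where "z \<in> lpv_space p v" "0 < \<epsilon>" "lower_dens {j. normp ((bshift ^^ j) z) < \<epsilon>} = 0"
    "\<And>\<theta>. 0 < \<theta> \<Longrightarrow> upper_dens {j. normp ((bshift ^^ j) z) < \<theta>} = 1"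
    using distr_chaotic_imp_scrambled_difference[OF assms] by blast
  then have "\<exists>N S C. b < N \<and> dc_block v k (N, S, C)" for k b
    by (rule exists_dc_block)
  then show ?thesis
    by (rule dc_blocks_imp_dc_criterion)
qed
end

theorem mainTheorem6:
  fixes p :: real and v :: "nat \<Rightarrow> real"
  assumes "1 \<le> p"
    and "\<forall>n\<ge>1. v n > 0"
    and "\<exists>M. \<forall>n\<ge>1. v n / v (Suc n) \<le> M"
  shows "(distr_chaotic_B p v \<longleftrightarrow> dense_distr_chaotic_B p v) \<and>
    (distr_chaotic_B p v \<longleftrightarrow>
      (\<exists>\<epsilon>::real. \<exists>N :: nat \<Rightarrow> nat. \<exists>S :: nat \<Rightarrow> nat set. \<exists>C :: nat \<Rightarrow> nat \<Rightarrow> complex.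
         \<epsilon> > 0 \<and> strict_mono_on {1..} N \<and> (\<forall>k\<ge>1. N k \<ge> 1) \<and>
         (\<forall>k\<ge>1. finite (S k) \<and> S k \<noteq> {} \<and> S k \<subseteq> {1..} \<and> (\<forall>j\<in>S k. C k j \<noteq> 0)) \<and>
         (\<forall>k\<ge>1. real (card {n\<in>{1..N k}.
              (\<Sum>j\<in>S k. norm (C k j) * vext v (int j - int n)) /
              (\<Sum>j\<in>S k. norm (C k j) * v j) \<ge> real k}) \<ge> real (N k) * \<epsilon>)))"
proof -
  obtain M where M: "\<And>n. 1 \<le> n \<Longrightarrow> v n / v (Suc n) \<le> M"
    using assms(3) by blast
  interpret weighted_backward_shift p v "max M 1"
  proof
    show "0 < p" "1 \<le> max M 1"
      using assms(1) by auto
    show "0 < v n" if "1 \<le> n" for n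
      using assms(2) that by simp
    show "v n \<le> max M 1 * v (Suc n)" if "1 \<le> n" for n
    proof -
      have "v n \<le> M * v (Suc n)"
        using M[OF that] assms(2) by (simp add: divide_le_eq)
      also have "\<dots> \<le> max M 1 * v (Suc n)"
        using assms(2) by (intro mult_right_mono) (auto intro: less_imp_le)
      finally show ?thesis .
    qed
  qed
  have "distr_chaotic_B p v \<Longrightarrow> dc_criterion v"
    by (rule distr_chaotic_imp_dc_criterion)
  moreover have "dc_criterion v \<Longrightarrow> dense_distr_chaotic_B p v"
    using dc_criterion_imp_expanding_profiles expanding_profiles_imp_distr_irregular
      distr_irregular_imp_dense_dc by blast
  moreover have "dense_distr_chaotic_B p v \<Longrightarrow> distr_chaotic_B p v"
    unfolding dense_distr_chaotic_B_def distr_chaotic_B_def by blast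
  ultimately show ?thesis
    unfolding shift_ratio_def[symmetric] dc_criterion_def[symmetric] by blast
qed

end
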